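(* Let $T$ be a tree, $A\in\mathcal R(T)$, and let $T_1,\dots,T_c$ be mutually independent subtrees of $T$. (1) If $\mathrm{nullity}(A)>P(T\setminus(T_1\cup\dots\cup T_c))$, then at least one of $A[T_1],\dots,A[T_c]$ is singular. (2) If $\lambda\in\sigma(A)$ with $\mathrm{mult}(\lambda,A)>P(T\setminus(T_1\cup\dots\cup T_c))$, then $\lambda$ is an eigenvalue of at least one of $A[T_1],\dots,A[T_c]$.
   Context: $\mathcal R(T)$ is the set of real matrices indexed by $V(T)$ with $a_{ij}\ne0$ iff $\{i,j\}\in E(T)$ for $i\ne j$, and $a_{ij}a_{ji}>0$ on every edge; diagonal arbitrary. $A[T_i]$ is the principal submatrix on $V(T_i)$. Subtrees $T_1,T_2$ are independent if no edge of $T$ joins them. A path cover of $G$ is a set of vertex-disjoint induced paths covering $V(G)$; $P(G)$ is the minimum size of a path cover. $\mathrm{mult}(\lambda,A)$ is the algebraic multiplicity of $\lambda$ (matrices in $\mathcal R(T)$ are diagonally similar to real symmetric matrices). *)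

theory Defs
  imports "Jordan_Normal_Form.Char_Poly" "Jordan_Normal_Form.Matrix_Kernel"
    "Jordan_Normal_Form.DL_Submatrix"
begin

text \<open>Graphs: vertex set {0..<n}, adjacency relation E (symmetric, irreflexive).
  Subgraphs are identified with their vertex sets (induced subgraphs).\<close>

definition simple_graph :: "nat \<Rightarrow> (nat \<Rightarrow> nat \<Rightarrow> bool) \<Rightarrow> bool" where
  "simple_graph n E \<longleftrightarrow> (\<forall>i j. E i j \<longrightarrow> i < n \<and> j < n \<and> i \<noteq> j \<and> E j i)"

definition edges_in :: "(nat \<Rightarrow> nat \<Rightarrow> bool) \<Rightarrow> nat set \<Rightarrow> (nat \<times> nat) set" where
  "edges_in E S = {(i,j). i \<in> S \<and> j \<in> S \<and> i < j \<and> E i j}"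

definition walk_in :: "(nat \<Rightarrow> nat \<Rightarrow> bool) \<Rightarrow> nat set \<Rightarrow> nat list \<Rightarrow> bool" where
  "walk_in E S xs \<longleftrightarrow> xs \<noteq> [] \<and> set xs \<subseteq> S \<and>
     (\<forall>k. Suc k < length xs \<longrightarrow> E (xs ! k) (xs ! Suc k))"

definition connected_in :: "(nat \<Rightarrow> nat \<Rightarrow> bool) \<Rightarrow> nat set \<Rightarrow> bool" where
  "connected_in E S \<longleftrightarrow> (\<forall>u\<in>S. \<forall>v\<in>S. \<exists>xs. walk_in E S xs \<and> hd xs = u \<and> last xs = v)"

definition is_tree_on :: "(nat \<Rightarrow> nat \<Rightarrow> bool) \<Rightarrow> nat set \<Rightarrow> bool" where
  "is_tree_on E S \<longleftrightarrow> finite S \<and> S \<noteq> {} \<and> connected_in E S \<and> card (edges_in E S) = card S - 1"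

definition is_tree :: "nat \<Rightarrow> (nat \<Rightarrow> nat \<Rightarrow> bool) \<Rightarrow> bool" where
  "is_tree n E \<longleftrightarrow> simple_graph n E \<and> is_tree_on E {0..<n}"

definition is_subtree :: "nat \<Rightarrow> (nat \<Rightarrow> nat \<Rightarrow> bool) \<Rightarrow> nat set \<Rightarrow> bool" where
  "is_subtree n E S \<longleftrightarrow> S \<subseteq> {0..<n} \<and> is_tree_on E S"

definition independent :: "(nat \<Rightarrow> nat \<Rightarrow> bool) \<Rightarrow> nat set \<Rightarrow> nat set \<Rightarrow> bool" where
  "independent E S1 S2 \<longleftrightarrow> S1 \<inter> S2 = {} \<and> (\<forall>i\<in>S1. \<forall>j\<in>S2. \<not> E i j)"

definition induced_path :: "(nat \<Rightarrow> nat \<Rightarrow> bool) \<Rightarrow> nat set \<Rightarrow> bool" where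
  "induced_path E Q \<longleftrightarrow> (\<exists>xs. xs \<noteq> [] \<and> distinct xs \<and> set xs = Q \<and>
     (\<forall>k l. k < length xs \<longrightarrow> l < length xs \<longrightarrow>
        (E (xs ! k) (xs ! l) \<longleftrightarrow> (l = Suc k \<or> k = Suc l))))"

definition path_cover :: "(nat \<Rightarrow> nat \<Rightarrow> bool) \<Rightarrow> nat set \<Rightarrow> nat set set \<Rightarrow> bool" where
  "path_cover E S C \<longleftrightarrow> \<Union>C = S \<and> (\<forall>Q\<in>C. induced_path E Q) \<and>
     (\<forall>Q1\<in>C. \<forall>Q2\<in>C. Q1 \<noteq> Q2 \<longrightarrow> Q1 \<inter> Q2 = {})"

definition path_cover_number :: "(nat \<Rightarrow> nat \<Rightarrow> bool) \<Rightarrow> nat set \<Rightarrow> nat" where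
  "path_cover_number E S = (LEAST k. \<exists>C. path_cover E S C \<and> finite C \<and> card C = k)"

definition in_R :: "nat \<Rightarrow> (nat \<Rightarrow> nat \<Rightarrow> bool) \<Rightarrow> real mat \<Rightarrow> bool" where
  "in_R n E A \<longleftrightarrow> A \<in> carrier_mat n n \<and>
     (\<forall>i<n. \<forall>j<n. i \<noteq> j \<longrightarrow> (A $$ (i,j) \<noteq> 0 \<longleftrightarrow> E i j)) \<and>
     (\<forall>i<n. \<forall>j<n. E i j \<longrightarrow> A $$ (i,j) * A $$ (j,i) > 0)"

definition principal_submatrix :: "'a mat \<Rightarrow> nat set \<Rightarrow> 'a mat" where
  "principal_submatrix A S = submatrix A S S"

definition alg_mult :: "real \<Rightarrow> real mat \<Rightarrow> nat" where
  "alg_mult x A = Polynomial.order x (char_poly A)"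

end

theory Submission
  imports Defs "Jordan_Normal_Form.Jordan_Normal_Form_Existence"
    "Jordan_Normal_Form.Jordan_Normal_Form_Uniqueness"
begin

text \<open>Write \<open>X\<close> for the union of the subtrees and \<open>\<nu>(U)\<close> for the nullity of \<open>A[U]\<close>. Deleting an
  induced path \<open>Q\<close> from \<open>U\<close> lowers \<open>\<nu>\<close> by at most one: since \<open>T\<close> is a tree, every component of
  \<open>U - Q\<close> is attached to \<open>Q\<close> at a single vertex, which makes the rows of the path vertices that
  act nontrivially on the kernel of \<open>A[U - Q]\<close> independent there, while a kernel vector of
  \<open>A[U]\<close> vanishing at the start of \<open>Q\<close> and just after each such vertex vanishes on all of \<open>Q\<close>.
  Peeling off a minimum path cover of \<open>T - X\<close> gives \<open>nullity A \<le> \<nu>(X) + P(T - X)\<close>, and \<open>\<nu>(X) = 0\<close>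
  when every \<open>A[T\<^sub>i]\<close> is nonsingular, because independent subtrees do not interact. For
  eigenvalues, \<open>A\<close> is diagonally similar to a symmetric matrix, so \<open>mult(\<lambda>, A)\<close> is the nullity of
  \<open>A - \<lambda>I\<close>, which has the same off-diagonal pattern.\<close>

lemma mat_kernel_mat_of_rows:
  fixes rs :: "'a::field vec list"
  assumes rs: "set rs \<subseteq> carrier_vec n"
  shows "mat_kernel (mat_of_rows n rs) = {x \<in> carrier_vec n. \<forall>r\<in>set rs. r \<bullet> x = 0}"
proof -
  have "mat_of_rows n rs *\<^sub>v x = 0\<^sub>v (length rs) \<longleftrightarrow> (\<forall>r\<in>set rs. r \<bullet> x = 0)" for x
  proof -
    have "mat_of_rows n rs *\<^sub>v x = 0\<^sub>v (length rs) \<longleftrightarrow> (\<forall>i<length rs. rs ! i \<bullet> x = 0)"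
      using rs by (auto simp: vec_eq_iff mat_of_rows_row nth_mem subset_iff)
    also have "\<dots> \<longleftrightarrow> (\<forall>r\<in>set rs. r \<bullet> x = 0)" by (metis in_set_conv_nth)
    finally show ?thesis .
  qed
  thus ?thesis using mat_kernel[OF mat_of_rows_carrier(1)] by auto
qed

lemma kernel_dim_cong:
  fixes A B :: "'a::field mat"
  assumes "dim_col A = dim_col B" "mat_kernel A = mat_kernel B"
  shows "kernel_dim A = kernel_dim B"
  using assms unfolding kernel_dim_def by simp

lemma kernel_dim_eq_0:
  fixes A :: "'a::field mat"
  assumes A: "A \<in> carrier_mat nr nc" and triv: "mat_kernel A = {0\<^sub>v nc}"
  shows "kernel_dim A = 0"
proof -
  interpret K: kernel nr nc A by unfold_locales (rule A)
  have "K.Ker.gen_set {}" using K.Ker.span_empty triv by simp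
  then show ?thesis using K.Ker.gen_ge_dim[of "{}"] K.kernel_dim by simp
qed

text \<open>Rank-nullity for the functional \<open>x \<mapsto> w \<bullet> x\<close> on the kernel.\<close>

lemma kernel_dim_append_row_eq:
  fixes rs :: "'a::field vec list" and w :: "'a vec"
  assumes rs: "set rs \<subseteq> carrier_vec n" and w: "w \<in> carrier_vec n"
    and x0: "x0 \<in> mat_kernel (mat_of_rows n rs)" "w \<bullet> x0 \<noteq> 0"
  shows "kernel_dim (mat_of_rows n rs) = kernel_dim (mat_of_rows n (rs @ [w])) + 1"
proof -
  have rs': "set (rs @ [w]) \<subseteq> carrier_vec n" using rs w by auto
  interpret K1: kernel "length rs" n "mat_of_rows n rs" by unfold_locales simp
  interpret K2: kernel "Suc (length rs)" n "mat_of_rows n (rs @ [w])"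
    by unfold_locales (metis length_append_singleton mat_of_rows_carrier(1))
  interpret V1: vec_space "TYPE('a)" 1 .
  define T where "T = (\<lambda>x::'a vec. vec 1 (\<lambda>_. w \<bullet> x))"
  interpret L: linear_map class_ring K1.VK V1.V T
  proof unfold_locales
    show "T \<in> module_hom class_ring K1.VK V1.V"
      unfolding module_hom_def T_def
      using w by (auto simp: module_vec_simps mat_kernel_def scalar_prod_add_distrib[of w n]
          scalar_prod_smult_distrib[of w n] intro!: eq_vecI)
  qed
  have fd: "K1.Ker.fin_dim"
  proof -
    obtain B where "finite B" "K1.basis B"
      using kernel_basis_exists[of "mat_of_rows n rs" "length rs" n] by auto
    then show ?thesis unfolding K1.Ker.fin_dim_def K1.Ker.basis_def by auto
  qed
  have ker: "L.kerT = mat_kernel (mat_of_rows n (rs @ [w]))"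
    unfolding mat_kernel_mat_of_rows[OF rs'] L.ker_def
    using mat_kernel_mat_of_rows[OF rs] by (auto simp: T_def module_vec_simps vec_eq_iff)
  have "carrier_vec 1 \<subseteq> L.imT"
  proof
    fix v :: "'a vec" assume v: "v \<in> carrier_vec 1"
    define c where "c = v $ 0 / (w \<bullet> x0)"
    have x0c: "x0 \<in> carrier_vec n" using x0(1) mat_kernel_mat_of_rows[OF rs] by auto
    have "c \<cdot>\<^sub>v x0 \<in> mat_kernel (mat_of_rows n rs)"
      using x0(1) by (intro mat_kernel_smult) auto
    moreover have "T (c \<cdot>\<^sub>v x0) = v"
      using v x0 x0c w by (auto simp: T_def c_def vec_eq_iff scalar_prod_smult_distrib[of w n])
    ultimately show "v \<in> L.imT" unfolding L.im_def by force
  qed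
  then have "L.imT = carrier_vec 1" using L.im_def by (auto simp: T_def)
  then have "vectorspace.dim class_ring (V1.V\<lparr>carrier := L.imT\<rparr>) = 1"
    using V1.dim_is_n by (simp add: module_vec_def)
  then show ?thesis using L.rank_nullity[OF fd] ker K1.kernel_dim K2.kernel_dim by simp
qed

lemma kernel_dim_append_row_le:
  fixes rs :: "'a::field vec list" and w :: "'a vec"
  assumes rs: "set rs \<subseteq> carrier_vec n" and w: "w \<in> carrier_vec n"
  shows "kernel_dim (mat_of_rows n rs) \<le> kernel_dim (mat_of_rows n (rs @ [w])) + 1"
proof (cases "\<exists>x \<in> mat_kernel (mat_of_rows n rs). w \<bullet> x \<noteq> 0")
  case False
  have rs': "set (rs @ [w]) \<subseteq> carrier_vec n" using rs w by auto
  with False have "mat_kernel (mat_of_rows n rs) = mat_kernel (mat_of_rows n (rs @ [w]))"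
    unfolding mat_kernel_mat_of_rows[OF rs] mat_kernel_mat_of_rows[OF rs'] by auto
  then show ?thesis using kernel_dim_cong[of "mat_of_rows n rs" "mat_of_rows n (rs @ [w])"] by simp
qed (use kernel_dim_append_row_eq[OF rs w] in force)

lemma kernel_dim_append_rows_le:
  fixes rs ws :: "'a::field vec list"
  assumes rs: "set rs \<subseteq> carrier_vec n" and ws: "set ws \<subseteq> carrier_vec n"
  shows "kernel_dim (mat_of_rows n rs) \<le> kernel_dim (mat_of_rows n (rs @ ws)) + length ws"
  using ws
proof (induction ws rule: rev_induct)
  case (snoc w ws)
  have "set (rs @ ws) \<subseteq> carrier_vec n" using rs snoc.prems by auto
  then have "kernel_dim (mat_of_rows n (rs @ ws)) \<le> kernel_dim (mat_of_rows n (rs @ ws @ [w])) + 1"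
    using kernel_dim_append_row_le[of "rs @ ws" n w] snoc.prems by auto
  then show ?case using snoc by auto
qed simp

lemma kernel_dim_append_rows_eq:
  fixes rs ws :: "'a::field vec list"
  assumes rs: "set rs \<subseteq> carrier_vec n" and ws: "set ws \<subseteq> carrier_vec n"
    and dual: "\<And>i. i < length ws \<Longrightarrow> \<exists>x\<in>mat_kernel (mat_of_rows n rs).
          ws ! i \<bullet> x \<noteq> 0 \<and> (\<forall>j<length ws. j \<noteq> i \<longrightarrow> ws ! j \<bullet> x = 0)"
  shows "kernel_dim (mat_of_rows n rs) = kernel_dim (mat_of_rows n (rs @ ws)) + length ws"
  using ws dual
proof (induction ws rule: rev_induct)
  case (snoc w ws)
  have rsws: "set (rs @ ws) \<subseteq> carrier_vec n" using rs snoc.prems by auto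
  have IH: "kernel_dim (mat_of_rows n rs) = kernel_dim (mat_of_rows n (rs @ ws)) + length ws"
  proof (rule snoc.IH)
    show "set ws \<subseteq> carrier_vec n" using snoc.prems by auto
    fix i assume i: "i < length ws"
    then obtain x where x: "x \<in> mat_kernel (mat_of_rows n rs)" "(ws @ [w]) ! i \<bullet> x \<noteq> 0"
        "\<forall>j<length (ws @ [w]). j \<noteq> i \<longrightarrow> (ws @ [w]) ! j \<bullet> x = 0"
      using snoc.prems(2)[of i] by auto
    have "ws ! j \<bullet> x = 0" if "j < length ws" "j \<noteq> i" for j
      using x(3)[rule_format, of j] that by (simp add: nth_append)
    then show "\<exists>x\<in>mat_kernel (mat_of_rows n rs).
          ws ! i \<bullet> x \<noteq> 0 \<and> (\<forall>j<length ws. j \<noteq> i \<longrightarrow> ws ! j \<bullet> x = 0)"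
      using x(1,2) i by (auto simp: nth_append)
  qed
  obtain x where x: "x \<in> mat_kernel (mat_of_rows n rs)" "w \<bullet> x \<noteq> 0"
      "\<forall>j<length ws. ws ! j \<bullet> x = 0"
    using snoc.prems(2)[of "length ws"] by (auto simp: nth_append)
  have "x \<in> mat_kernel (mat_of_rows n (rs @ ws))"
    using x unfolding mat_kernel_mat_of_rows[OF rsws] mat_kernel_mat_of_rows[OF rs]
    by (auto simp: in_set_conv_nth)
  then have "kernel_dim (mat_of_rows n (rs @ ws)) = kernel_dim (mat_of_rows n (rs @ ws @ [w])) + 1"
    using kernel_dim_append_row_eq[OF rsws _ _ x(2)] snoc.prems by auto
  then show ?case using IH by simp
qed simp

lemma mult_mat_vec_index_sum:
  fixes M :: "'a::field mat"
  assumes "M \<in> carrier_mat n n" "x \<in> carrier_vec n" "u < n"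
  shows "(M *\<^sub>v x) $ u = (\<Sum>w<n. M $$ (u,w) * x $ w)"
  using assms by (auto simp: index_mult_mat_vec scalar_prod_def lessThan_atLeast0 intro!: sum.cong)

lemma mult_mat_vec_index_cong:
  fixes M :: "'a::field mat"
  assumes "M \<in> carrier_mat n n" "x \<in> carrier_vec n" "y \<in> carrier_vec n" "u < n"
    and "\<And>w. w < n \<Longrightarrow> M $$ (u,w) * x $ w = M $$ (u,w) * y $ w"
  shows "(M *\<^sub>v x) $ u = (M *\<^sub>v y) $ u"
  using assms mult_mat_vec_index_sum[of M n] by (metis (no_types, lifting) lessThan_iff sum.cong)

text \<open>\<open>local_kernel M n U\<close> is the kernel of the principal submatrix \<open>M[U]\<close>, embedded into
  \<open>carrier_vec n\<close> by zero padding; \<open>local_nullity M n U\<close> is its dimension, realised as the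
  nullity of the \<open>n \<times> n\<close> matrix obtained from \<open>M\<close> by replacing each row outside \<open>U\<close> by a unit
  vector.\<close>

definition local_rows :: "'a::field mat \<Rightarrow> nat \<Rightarrow> nat set \<Rightarrow> 'a vec list" where
  "local_rows M n U = map (\<lambda>u. if u \<in> U then row M u else unit_vec n u) [0..<n]"

definition local_kernel :: "'a::field mat \<Rightarrow> nat \<Rightarrow> nat set \<Rightarrow> 'a vec set" where
  "local_kernel M n U = {x \<in> carrier_vec n.
     (\<forall>u<n. u \<in> U \<longrightarrow> (M *\<^sub>v x) $ u = 0) \<and> (\<forall>u<n. u \<notin> U \<longrightarrow> x $ u = 0)}"

definition local_nullity :: "'a::field mat \<Rightarrow> nat \<Rightarrow> nat set \<Rightarrow> nat" where
  "local_nullity M n U = kernel_dim (mat_of_rows n (local_rows M n U))"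

lemma local_rows_carrier: "M \<in> carrier_mat n n \<Longrightarrow> set (local_rows M n U) \<subseteq> carrier_vec n"
  unfolding local_rows_def by auto

lemma mat_kernel_local_rows_append:
  fixes M :: "'a::field mat"
  assumes M: "M \<in> carrier_mat n n" and ws: "set ws \<subseteq> carrier_vec n"
  shows "mat_kernel (mat_of_rows n (local_rows M n U @ ws)) =
    {x \<in> local_kernel M n U. \<forall>w\<in>set ws. w \<bullet> x = 0}"
proof -
  have rows: "set (local_rows M n U @ ws) \<subseteq> carrier_vec n" using local_rows_carrier[OF M] ws by auto
  have "(\<forall>r\<in>set (local_rows M n U). r \<bullet> x = 0) \<longleftrightarrow>
     (\<forall>u<n. u \<in> U \<longrightarrow> (M *\<^sub>v x) $ u = 0) \<and> (\<forall>u<n. u \<notin> U \<longrightarrow> x $ u = 0)"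
    if x: "x \<in> carrier_vec n" for x
  proof -
    have "(\<forall>r\<in>set (local_rows M n U). r \<bullet> x = 0) \<longleftrightarrow>
        (\<forall>u<n. (if u \<in> U then row M u else unit_vec n u) \<bullet> x = 0)"
      unfolding local_rows_def by auto
    also have "\<dots> \<longleftrightarrow> (\<forall>u<n. u \<in> U \<longrightarrow> (M *\<^sub>v x) $ u = 0) \<and> (\<forall>u<n. u \<notin> U \<longrightarrow> x $ u = 0)"
      using M x by (auto simp: index_mult_mat_vec)
    finally show ?thesis .
  qed
  then show ?thesis unfolding mat_kernel_mat_of_rows[OF rows] local_kernel_def by auto
qed

lemma mat_kernel_local_rows:
  "M \<in> carrier_mat n n \<Longrightarrow> mat_kernel (mat_of_rows n (local_rows M n U)) = local_kernel M n U"
  using mat_kernel_local_rows_append[of M n "[]" U] by simp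

lemma local_nullity_eq_0:
  fixes M :: "'a::field mat"
  assumes M: "M \<in> carrier_mat n n" and triv: "local_kernel M n U = {0\<^sub>v n}"
  shows "local_nullity M n U = 0"
  unfolding local_nullity_def
proof (rule kernel_dim_eq_0)
  show "mat_of_rows n (local_rows M n U) \<in> carrier_mat n n"
    using mat_of_rows_carrier(1)[of n "local_rows M n U"] by (simp add: local_rows_def)
qed (simp add: mat_kernel_local_rows[OF M] triv)

lemma local_nullity_all:
  fixes M :: "'a::field mat"
  assumes M: "M \<in> carrier_mat n n"
  shows "local_nullity M n {0..<n} = kernel_dim M"
proof -
  have "local_rows M n {0..<n} = rows M" unfolding local_rows_def rows_def using M by auto
  then show ?thesis unfolding local_nullity_def using mat_of_rows_rows[of M] M by simp
qed

definition restrict_vec :: "nat \<Rightarrow> nat set \<Rightarrow> 'a::zero vec \<Rightarrow> 'a vec" where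
  "restrict_vec n S x = vec n (\<lambda>w. if w \<in> S then x $ w else 0)"

lemma restrict_vec_carrier[simp]: "restrict_vec n S x \<in> carrier_vec n"
  unfolding restrict_vec_def by auto

lemma restrict_vec_index[simp]: "w < n \<Longrightarrow> restrict_vec n S x $ w = (if w \<in> S then x $ w else 0)"
  unfolding restrict_vec_def by auto

lemma mult_restrict_vec_index:
  fixes M :: "'a::field mat"
  assumes M: "M \<in> carrier_mat n n" and x: "x \<in> carrier_vec n" and u: "u < n"
    and outside: "\<And>w. w < n \<Longrightarrow> w \<notin> S \<Longrightarrow> M $$ (u,w) = 0 \<or> x $ w = 0"
  shows "(M *\<^sub>v restrict_vec n S x) $ u = (M *\<^sub>v x) $ u"
  by (rule mult_mat_vec_index_cong[OF M _ x u]) (use outside in auto)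

lemma mult_restrict_vec_index_0:
  fixes M :: "'a::field mat"
  assumes M: "M \<in> carrier_mat n n" and u: "u < n"
    and inside: "\<And>w. w < n \<Longrightarrow> w \<in> S \<Longrightarrow> M $$ (u,w) = 0"
  shows "(M *\<^sub>v restrict_vec n S x) $ u = 0"
  using mult_mat_vec_index_cong[OF M restrict_vec_carrier zero_carrier_vec u, of S x] inside M u
  by auto

lemma mult_restrict_vec_insert_index:
  fixes M :: "'a::field mat"
  assumes M: "M \<in> carrier_mat n n" and u: "u < n" and v: "v < n" "v \<notin> S"
  shows "(M *\<^sub>v restrict_vec n (insert v S) x) $ u = (M *\<^sub>v restrict_vec n S x) $ u + M $$ (u,v) * x $ v"
proof -
  have "(\<Sum>w<n. M $$ (u,w) * restrict_vec n (insert v S) x $ w) =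
      (\<Sum>w<n. M $$ (u,w) * restrict_vec n S x $ w + (if w = v then M $$ (u,w) * x $ w else 0))"
    using v(2) by (intro sum.cong) auto
  then show ?thesis using v(1) by (simp add: mult_mat_vec_index_sum[OF M _ u] sum.distrib)
qed

section \<open>Removing an induced path\<close>

text \<open>\<open>Rs i\<close> is the part of \<open>U - set qs\<close> hanging off the path at \<open>qs ! i\<close>, and \<open>i\<close> is
  \<open>active\<close> when the row of \<open>qs ! i\<close> does not vanish on the local kernel of \<open>U - set qs\<close>. Active
  rows are independent there, and one vanishing condition per active vertex, plus one at the start
  of the path, forces a vector of the local kernel of \<open>U\<close> to vanish on the whole path.\<close>

locale path_removal =
  fixes M :: "'a::field mat" and n :: nat and U :: "nat set" and E :: "nat \<Rightarrow> nat \<Rightarrow> bool"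
    and qs :: "nat list" and Rs :: "nat \<Rightarrow> nat set"
  assumes M: "M \<in> carrier_mat n n"
    and U: "U \<subseteq> {0..<n}"
    and qs_U: "set qs \<subseteq> U" and qs_distinct: "distinct qs" and qs_nonempty: "qs \<noteq> []"
    and pattern: "\<And>u w. u < n \<Longrightarrow> w < n \<Longrightarrow> u \<noteq> w \<Longrightarrow> \<not> E u w \<Longrightarrow> M $$ (u,w) = 0"
    and E_sym: "\<And>u w. E u w \<Longrightarrow> E w u"
    and induced: "\<And>k l. k < length qs \<Longrightarrow> l < length qs \<Longrightarrow>
        E (qs ! k) (qs ! l) \<longleftrightarrow> (l = Suc k \<or> k = Suc l)"
    and path_entry: "\<And>k. Suc k < length qs \<Longrightarrow> M $$ (qs ! k, qs ! Suc k) \<noteq> 0"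
    and Rs_sub: "\<And>i. i < length qs \<Longrightarrow> Rs i \<subseteq> U - set qs"
    and Rs_closed: "\<And>i u w. i < length qs \<Longrightarrow> u \<in> Rs i \<Longrightarrow> w \<in> U - set qs - Rs i \<Longrightarrow> \<not> E u w"
    and Rs_attached: "\<And>i j r. i < length qs \<Longrightarrow> j < length qs \<Longrightarrow> j \<noteq> i \<Longrightarrow> r \<in> Rs i \<Longrightarrow>
        \<not> E (qs ! j) r"
    and Rs_neighbours: "\<And>j r. j < length qs \<Longrightarrow> r \<in> U - set qs \<Longrightarrow> E (qs ! j) r \<Longrightarrow> r \<in> Rs j"
begin

abbreviation (input) "R \<equiv> U - set qs"
abbreviation (input) "m \<equiv> length qs"

lemma qs_less: "i < m \<Longrightarrow> qs ! i < n"
  using qs_U U nth_mem by fastforce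

lemma qs_in_U: "i < m \<Longrightarrow> qs ! i \<in> U"
  using qs_U nth_mem by fastforce

lemma qs_eq_iff: "i < m \<Longrightarrow> j < m \<Longrightarrow> qs ! i = qs ! j \<longleftrightarrow> i = j"
  using qs_distinct nth_eq_iff_index_eq by blast

lemma notin_R_iff: "u \<in> U \<Longrightarrow> u \<notin> R \<longleftrightarrow> (\<exists>i<m. u = qs ! i)"
  by (auto simp: in_set_conv_nth)

lemma R_less: "u \<in> R \<Longrightarrow> u < n"
  using U by auto

lemma local_kernel_R:
  assumes "z \<in> local_kernel M n R"
  shows "z \<in> carrier_vec n" "\<And>u. u < n \<Longrightarrow> u \<notin> R \<Longrightarrow> z $ u = 0"
    "\<And>u. u \<in> R \<Longrightarrow> (M *\<^sub>v z) $ u = 0"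
  using assms R_less unfolding local_kernel_def by auto

lemma local_kernel_U:
  assumes "x \<in> local_kernel M n U"
  shows "x \<in> carrier_vec n" "\<And>u. u < n \<Longrightarrow> u \<notin> U \<Longrightarrow> x $ u = 0"
    "\<And>u. u \<in> U \<Longrightarrow> (M *\<^sub>v x) $ u = 0"
  using assms U unfolding local_kernel_def by auto

lemma restrict_branch_local_kernel:
  assumes i: "i < m" and x: "x \<in> carrier_vec n" and supp: "\<forall>u<n. u \<notin> U \<longrightarrow> x $ u = 0"
    and x_qs: "x $ (qs ! i) = 0" and Mx: "\<forall>u\<in>Rs i. (M *\<^sub>v x) $ u = 0"
  shows "restrict_vec n (Rs i) x \<in> local_kernel M n R"
proof -
  have "(M *\<^sub>v restrict_vec n (Rs i) x) $ u = 0" if u: "u \<in> R" for u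
  proof (cases "u \<in> Rs i")
    case True
    have "M $$ (u,w) = 0 \<or> x $ w = 0" if w: "w < n" "w \<notin> Rs i" for w
    proof (cases "w \<in> R")
      case True
      then have "\<not> E u w" "u \<noteq> w" using Rs_closed[OF i \<open>u \<in> Rs i\<close>, of w] w \<open>u \<in> Rs i\<close> by auto
      then show ?thesis using pattern[OF R_less[OF u] w(1)] by simp
    next
      case False
      show ?thesis
      proof (cases "w \<in> U")
        case True
        then obtain j where j: "j < m" "w = qs ! j" using notin_R_iff False by blast
        show ?thesis
        proof (cases "j = i")
          case False
          then have "\<not> E w u" using Rs_attached[OF i j(1) _ \<open>u \<in> Rs i\<close>] j(2) by simp
          then have "\<not> E u w" using E_sym by blast
          moreover have "u \<noteq> w" using u nth_mem[OF j(1)] j(2) by auto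
          ultimately show ?thesis using pattern[OF R_less[OF u] w(1)] by simp
        qed (use x_qs j in simp)
      qed (use supp w in auto)
    qed
    then have "(M *\<^sub>v restrict_vec n (Rs i) x) $ u = (M *\<^sub>v x) $ u"
      using mult_restrict_vec_index[OF M x R_less[OF u]] by blast
    then show ?thesis using Mx True by simp
  next
    case False
    have "M $$ (u,w) = 0" if w: "w < n" "w \<in> Rs i" for w
    proof -
      have "\<not> E w u" using Rs_closed[OF i w(2), of u] u False by simp
      then have "\<not> E u w" using E_sym by blast
      moreover have "u \<noteq> w" using False w(2) by auto
      ultimately show ?thesis using pattern[OF R_less[OF u] w(1)] by simp
    qed
    then show ?thesis using mult_restrict_vec_index_0[OF M R_less[OF u]] by blast
  qed
  moreover have "restrict_vec n (Rs i) x $ u = 0" if "u < n" "u \<notin> R" for u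
    using that Rs_sub[OF i] by auto
  ultimately show ?thesis unfolding local_kernel_def using R_less by auto
qed

definition active :: "nat set" where
  "active = {i. i < m \<and> (\<exists>z\<in>local_kernel M n R. (M *\<^sub>v z) $ (qs ! i) \<noteq> 0)}"

lemma inactive_row:
  "i < m \<Longrightarrow> i \<notin> active \<Longrightarrow> z \<in> local_kernel M n R \<Longrightarrow> (M *\<^sub>v z) $ (qs ! i) = 0"
  unfolding active_def by auto

lemma active_witness:
  assumes "i \<in> active"
  shows "\<exists>z\<in>local_kernel M n R. (M *\<^sub>v z) $ (qs ! i) \<noteq> 0 \<and>
           (\<forall>j<m. j \<noteq> i \<longrightarrow> (M *\<^sub>v z) $ (qs ! j) = 0)"
proof -
  obtain z where i: "i < m" and z: "z \<in> local_kernel M n R" "(M *\<^sub>v z) $ (qs ! i) \<noteq> 0"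
    using assms unfolding active_def by auto
  note zR = local_kernel_R[OF z(1)]
  let ?z = "restrict_vec n (Rs i) z"
  have "z $ (qs ! i) = 0" using zR(2)[OF qs_less[OF i]] i by simp
  then have "?z \<in> local_kernel M n R"
    using zR(2,3) Rs_sub[OF i] by (intro restrict_branch_local_kernel[OF i zR(1)]) auto
  moreover have "(M *\<^sub>v ?z) $ (qs ! i) = (M *\<^sub>v z) $ (qs ! i)"
  proof (rule mult_restrict_vec_index[OF M zR(1) qs_less[OF i]])
    fix w assume w: "w < n" "w \<notin> Rs i"
    show "M $$ (qs ! i, w) = 0 \<or> z $ w = 0"
    proof (cases "w \<in> R")
      case True
      then show ?thesis
        using Rs_neighbours[OF i True] w pattern[OF qs_less[OF i] w(1)] nth_mem[OF i] by auto
    qed (use zR(2) w in auto)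
  qed
  moreover have "(M *\<^sub>v ?z) $ (qs ! j) = 0" if j: "j < m" "j \<noteq> i" for j
  proof (rule mult_restrict_vec_index_0[OF M qs_less[OF j(1)]])
    fix w assume w: "w < n" "w \<in> Rs i"
    then have "\<not> E (qs ! j) w" "qs ! j \<noteq> w" using Rs_attached[OF i j] Rs_sub[OF i] nth_mem[OF j(1)] by auto
    then show "M $$ (qs ! j, w) = 0" using pattern[OF qs_less[OF j(1)] w(1)] by simp
  qed
  ultimately show ?thesis using z(2) by (intro bexI[of _ ?z]) auto
qed

lemma path_row_restrict:
  assumes x: "x \<in> local_kernel M n U" and i: "i < m"
    and x_i: "x $ (qs ! i) = 0" and x_pred: "i = 0 \<or> x $ (qs ! (i - 1)) = 0"
  shows "(M *\<^sub>v restrict_vec n (insert (qs ! Suc i) (Rs i)) x) $ (qs ! i) = (M *\<^sub>v x) $ (qs ! i)"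
proof (rule mult_restrict_vec_index[OF M local_kernel_U(1)[OF x] qs_less[OF i]])
  fix w assume w: "w < n" "w \<notin> insert (qs ! Suc i) (Rs i)"
  show "M $$ (qs ! i, w) = 0 \<or> x $ w = 0"
  proof (cases "w \<in> U")
    case wU: True
    show ?thesis
    proof (cases "w \<in> R")
      case True
      then show ?thesis
        using Rs_neighbours[OF i True] w pattern[OF qs_less[OF i] w(1)] nth_mem[OF i] by auto
    next
      case False
      then obtain l where l: "l < m" "w = qs ! l" using notin_R_iff wU by blast
      consider "l = i" | "Suc l = i" | "l \<noteq> i" "Suc l \<noteq> i" by blast
      then show ?thesis
      proof cases
        case 3
        then have "\<not> E (qs ! i) w" "qs ! i \<noteq> w"
          using induced[OF i l(1)] qs_eq_iff[OF i l(1)] w l by auto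
        then show ?thesis using pattern[OF qs_less[OF i] w(1)] by simp
      qed (use x_i x_pred l in auto)
    qed
  qed (use local_kernel_U(2)[OF x] w in auto)
qed

text \<open>For inactive \<open>i\<close> the branch part of the row of \<open>qs ! i\<close> is a row applied to a vector of
  \<open>local_kernel M n R\<close>, hence zero; what remains is the path entry times \<open>x (qs ! Suc i)\<close>.\<close>

lemma inactive_propagates:
  assumes x: "x \<in> local_kernel M n U" and i: "Suc i < m" "i \<notin> active"
    and x_i: "x $ (qs ! i) = 0" and x_pred: "i = 0 \<or> x $ (qs ! (i - 1)) = 0"
  shows "x $ (qs ! Suc i) = 0"
proof -
  have im: "i < m" using i by auto
  note xU = local_kernel_U[OF x]
  have "restrict_vec n (Rs i) x \<in> local_kernel M n R"
    using restrict_branch_local_kernel[OF im xU(1)] xU(2) x_i xU(3) Rs_sub[OF im] by auto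
  then have "(M *\<^sub>v restrict_vec n (Rs i) x) $ (qs ! i) = 0" using inactive_row im i by auto
  moreover have "qs ! Suc i \<notin> Rs i" using Rs_sub[OF im] i(1) by auto
  ultimately have "(M *\<^sub>v x) $ (qs ! i) = M $$ (qs ! i, qs ! Suc i) * x $ (qs ! Suc i)"
    using path_row_restrict[OF x im x_i x_pred] mult_restrict_vec_insert_index[OF M qs_less[OF im] qs_less[OF i(1)]]
    by simp
  then have "M $$ (qs ! i, qs ! Suc i) * x $ (qs ! Suc i) = 0" using xU(3)[OF qs_in_U[OF im]] by simp
  then show ?thesis using path_entry[OF i(1)] by simp
qed

definition checkpoints :: "nat list" where
  "checkpoints = 0 # map Suc (filter (\<lambda>i. i \<in> active \<and> Suc i < m) [0..<m])"

definition active_rows :: "'a vec list" where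
  "active_rows = map (\<lambda>i. row M (qs ! i)) (filter (\<lambda>i. i \<in> active) [0..<m])"

lemma checkpoints_less: "s \<in> set checkpoints \<Longrightarrow> s < m"
  using qs_nonempty unfolding checkpoints_def by auto

lemma length_checkpoints: "length checkpoints \<le> length active_rows + 1"
proof -
  have "length (filter (\<lambda>i. Suc i < m) (filter (\<lambda>i. i \<in> active) [0..<m])) \<le>
      length (filter (\<lambda>i. i \<in> active) [0..<m])"
    by (rule length_filter_le)
  then show ?thesis by (simp add: checkpoints_def active_rows_def filter_filter conj_commute)
qed

lemma vanish_on_path:
  assumes x: "x \<in> local_kernel M n U" and cp: "\<forall>s\<in>set checkpoints. x $ (qs ! s) = 0"
  shows "\<forall>l<m. x $ (qs ! l) = 0"
proof -
  have "\<forall>l\<le>i. l < m \<longrightarrow> x $ (qs ! l) = 0" for i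
  proof (induction i)
    case 0 then show ?case using cp unfolding checkpoints_def by auto
  next
    case (Suc i)
    have "x $ (qs ! Suc i) = 0" if si: "Suc i < m"
    proof (cases "i \<in> active")
      case True
      then show ?thesis using si cp unfolding checkpoints_def by auto
    next
      case False
      then show ?thesis using inactive_propagates[OF x si False] Suc.IH si by auto
    qed
    then show ?case using Suc.IH le_Suc_eq by auto
  qed
  then show ?thesis by blast
qed

lemma row_mult: "u < n \<Longrightarrow> row M u \<bullet> x = (M *\<^sub>v x) $ u"
  using M by (simp add: index_mult_mat_vec)

lemma mat_kernel_checkpoints:
  "mat_kernel (mat_of_rows n (local_rows M n U @ map (\<lambda>s. unit_vec n (qs ! s)) checkpoints)) =
   mat_kernel (mat_of_rows n (local_rows M n R @ active_rows))"
proof -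
  have units: "set (map (\<lambda>s. unit_vec n (qs ! s)) checkpoints) \<subseteq> carrier_vec n" by auto
  have rows: "set active_rows \<subseteq> carrier_vec n" unfolding active_rows_def using M by auto
  have "{x \<in> local_kernel M n U. \<forall>s\<in>set checkpoints. x $ (qs ! s) = 0} =
        {x \<in> local_kernel M n R. \<forall>i<m. (M *\<^sub>v x) $ (qs ! i) = 0}"
  proof (intro equalityI subsetI; clarify)
    fix x assume x: "x \<in> local_kernel M n U" "\<forall>s\<in>set checkpoints. x $ (qs ! s) = 0"
    note xU = local_kernel_U[OF x(1)]
    have "x \<in> local_kernel M n R"
      unfolding local_kernel_def using xU vanish_on_path[OF x] notin_R_iff by fastforce
    then show "x \<in> local_kernel M n R \<and> (\<forall>i<m. (M *\<^sub>v x) $ (qs ! i) = 0)"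
      using xU(3) qs_in_U by auto
  next
    fix x assume x: "x \<in> local_kernel M n R" "\<forall>i<m. (M *\<^sub>v x) $ (qs ! i) = 0"
    note xR = local_kernel_R[OF x(1)]
    have "(M *\<^sub>v x) $ u = 0" if "u \<in> U" for u
      using xR(3) x(2) notin_R_iff[OF that] by (cases "u \<in> R") auto
    then have "x \<in> local_kernel M n U" unfolding local_kernel_def using xR by auto
    then show "x \<in> local_kernel M n U \<and> (\<forall>s\<in>set checkpoints. x $ (qs ! s) = 0)"
      using xR(2) checkpoints_less qs_less by auto
  qed
  moreover have "{x \<in> local_kernel M n R. \<forall>i<m. (M *\<^sub>v x) $ (qs ! i) = 0} =
        {x \<in> local_kernel M n R. \<forall>r\<in>set active_rows. r \<bullet> x = 0}"
    unfolding active_rows_def using inactive_row row_mult qs_less by fastforce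
  moreover have "{x \<in> local_kernel M n U. \<forall>w\<in>set (map (\<lambda>s. unit_vec n (qs ! s)) checkpoints). w \<bullet> x = 0}
      = {x \<in> local_kernel M n U. \<forall>s\<in>set checkpoints. x $ (qs ! s) = 0}"
    using checkpoints_less qs_less by (auto simp: local_kernel_def scalar_prod_left_unit)
  ultimately show ?thesis
    unfolding mat_kernel_local_rows_append[OF M units] mat_kernel_local_rows_append[OF M rows]
    by simp
qed

lemma local_nullity_R:
  "local_nullity M n R = kernel_dim (mat_of_rows n (local_rows M n R @ active_rows)) + length active_rows"
  unfolding local_nullity_def
proof (rule kernel_dim_append_rows_eq[OF local_rows_carrier[OF M]])
  define L where "L = filter (\<lambda>i. i \<in> active) [0..<m]"
  have L: "distinct L" "\<And>j. j < length L \<Longrightarrow> L ! j \<in> active \<and> L ! j < m"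
    unfolding L_def using nth_mem by (fastforce simp del: nth_mem)+
  show "set active_rows \<subseteq> carrier_vec n" unfolding active_rows_def using M by auto
  fix i assume "i < length active_rows"
  then have i: "i < length L" unfolding active_rows_def L_def by simp
  obtain z where z: "z \<in> local_kernel M n R" "(M *\<^sub>v z) $ (qs ! (L ! i)) \<noteq> 0"
      "\<forall>j<m. j \<noteq> L ! i \<longrightarrow> (M *\<^sub>v z) $ (qs ! j) = 0"
    using active_witness L(2)[OF i] by blast
  have "L ! j \<noteq> L ! i" if "j < length L" "j \<noteq> i" for j
    using L(1) i that nth_eq_iff_index_eq by blast
  then show "\<exists>x\<in>mat_kernel (mat_of_rows n (local_rows M n R)).
      active_rows ! i \<bullet> x \<noteq> 0 \<and> (\<forall>j<length active_rows. j \<noteq> i \<longrightarrow> active_rows ! j \<bullet> x = 0)"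
    using z i L(2) row_mult qs_less mat_kernel_local_rows[OF M]
    unfolding active_rows_def L_def[symmetric] by (intro bexI[of _ z]) auto
qed

theorem local_nullity_le: "local_nullity M n U \<le> local_nullity M n R + 1"
proof -
  let ?units = "map (\<lambda>s. unit_vec n (qs ! s) :: 'a vec) checkpoints"
  have units: "set ?units \<subseteq> carrier_vec n" by auto
  have "local_nullity M n U \<le> kernel_dim (mat_of_rows n (local_rows M n U @ ?units)) + length ?units"
    unfolding local_nullity_def by (rule kernel_dim_append_rows_le[OF local_rows_carrier[OF M] units])
  also have "kernel_dim (mat_of_rows n (local_rows M n U @ ?units)) =
      kernel_dim (mat_of_rows n (local_rows M n R @ active_rows))"
    by (rule kernel_dim_cong) (auto simp: mat_kernel_checkpoints)
  finally show ?thesis using local_nullity_R length_checkpoints by simp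
qed

end

section \<open>Walks and rooted trees\<close>

definition adj_in :: "(nat \<Rightarrow> nat \<Rightarrow> bool) \<Rightarrow> nat set \<Rightarrow> nat \<Rightarrow> nat \<Rightarrow> bool" where
  "adj_in E S a b \<longleftrightarrow> a \<in> S \<and> b \<in> S \<and> E a b"

lemma adj_in_mono: "S \<subseteq> S' \<Longrightarrow> adj_in E S a b \<Longrightarrow> adj_in E S' a b"
  unfolding adj_in_def by auto

lemma rtranclp_adj_in_mono: "S \<subseteq> S' \<Longrightarrow> (adj_in E S)\<^sup>*\<^sup>* a b \<Longrightarrow> (adj_in E S')\<^sup>*\<^sup>* a b"
  by (rule mono_rtranclp[rule_format, of "adj_in E S"]) (auto intro: adj_in_mono)

lemma rtranclp_adj_in_sym:
  assumes "(adj_in E S)\<^sup>*\<^sup>* a b" "\<And>x y. E x y \<Longrightarrow> E y x"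
  shows "(adj_in E S)\<^sup>*\<^sup>* b a"
proof -
  have "symp (adj_in E S)" using assms(2) unfolding adj_in_def by (auto intro: sympI)
  then show ?thesis using assms(1) by (metis sympD symp_rtranclp)
qed

lemma walk_in_rtranclp: "walk_in E S xs \<Longrightarrow> (adj_in E S)\<^sup>*\<^sup>* (hd xs) (last xs)"
proof (induction xs)
  case Nil then show ?case by (simp add: walk_in_def)
next
  case (Cons x ys)
  show ?case
  proof (cases "ys = []")
    case True then show ?thesis by simp
  next
    case False
    have w: "walk_in E S ys" unfolding walk_in_def
    proof (intro conjI allI impI)
      show "ys \<noteq> []" "set ys \<subseteq> S" using Cons.prems False unfolding walk_in_def by auto
      fix k assume "Suc k < length ys"
      then have "Suc (Suc k) < length (x # ys)" by simp
      then have "E ((x#ys) ! Suc k) ((x#ys) ! Suc (Suc k))" using Cons.prems unfolding walk_in_def by blast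
      then show "E (ys ! k) (ys ! Suc k)" by simp
    qed
    have "E x (hd ys)" using Cons.prems False unfolding walk_in_def
      by (metis One_nat_def Suc_less_eq hd_conv_nth length_Cons length_greater_0_conv nth_Cons_0 nth_Cons_Suc)
    moreover have "x \<in> S" "hd ys \<in> S" using Cons.prems False unfolding walk_in_def by auto
    ultimately have "adj_in E S x (hd ys)" unfolding adj_in_def by auto
    then show ?thesis using Cons.IH[OF w] False by (auto intro: converse_rtranclp_into_rtranclp)
  qed
qed

lemma rtranclp_walk_in: "(adj_in E S)\<^sup>*\<^sup>* u v \<Longrightarrow> u \<in> S \<Longrightarrow> \<exists>xs. walk_in E S xs \<and> hd xs = u \<and> last xs = v"
proof (induction rule: converse_rtranclp_induct)
  case base then show ?case by (intro exI[of _ "[v]"]) (auto simp: walk_in_def)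
next
  case (step u w)
  then have "w \<in> S" "u \<in> S" "E u w" unfolding adj_in_def by auto
  with step.IH obtain xs where xs: "walk_in E S xs" "hd xs = w" "last xs = v" by auto
  have "walk_in E S (u # xs)" unfolding walk_in_def
  proof (intro conjI allI impI)
    show "u # xs \<noteq> []" by simp
    show "set (u # xs) \<subseteq> S" using xs \<open>u \<in> S\<close> unfolding walk_in_def by auto
    fix k assume k: "Suc k < length (u # xs)"
    show "E ((u # xs) ! k) ((u # xs) ! Suc k)"
    proof (cases k)
      case 0 then show ?thesis using xs \<open>E u w\<close> unfolding walk_in_def by (simp add: hd_conv_nth)
    next
      case (Suc j) then show ?thesis using xs k unfolding walk_in_def by simp
    qed
  qed
  moreover have "xs \<noteq> []" using xs(1) unfolding walk_in_def by auto
  ultimately show ?case using xs by (intro exI[of _ "u # xs"]) auto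
qed

lemma connected_in_iff: "connected_in E S \<longleftrightarrow> (\<forall>u\<in>S. \<forall>v\<in>S. (adj_in E S)\<^sup>*\<^sup>* u v)"
  unfolding connected_in_def using walk_in_rtranclp rtranclp_walk_in by metis

lemma rtranclp_path_segment:
  assumes "\<And>t. k \<le> t \<Longrightarrow> t < l \<Longrightarrow> Q (qs ! t) (qs ! Suc t)" "k \<le> l"
  shows "Q\<^sup>*\<^sup>* (qs ! k) (qs ! l)"
  using assms(2,1)
proof (induction l rule: dec_induct)
  case (step l)
  then show ?case by (meson le_imp_less_Suc less_Suc_eq rtranclp.rtrancl_into_rtrancl)
qed simp

definition root_dist :: "(nat \<Rightarrow> nat \<Rightarrow> bool) \<Rightarrow> nat \<Rightarrow> nat \<Rightarrow> nat" where
  "root_dist P \<rho> v = (LEAST k. (P ^^ k) v \<rho>)"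

definition parent :: "(nat \<Rightarrow> nat \<Rightarrow> bool) \<Rightarrow> nat \<Rightarrow> nat \<Rightarrow> nat" where
  "parent P \<rho> v = (SOME w. P v w \<and> (P ^^ (root_dist P \<rho> v - 1)) w \<rho>)"

lemma parent_step:
  assumes reach: "P\<^sup>*\<^sup>* v \<rho>" and v: "v \<noteq> \<rho>"
  shows "P v (parent P \<rho> v)" "root_dist P \<rho> v = Suc (root_dist P \<rho> (parent P \<rho> v))"
proof -
  let ?d = "root_dist P \<rho>" and ?p = "parent P \<rho>"
  have dv: "(P ^^ ?d v) v \<rho>"
    using reach rtranclp_power unfolding root_dist_def by (metis LeastI_ex)
  then obtain k where k: "?d v = Suc k" using v by (metis not0_implies_Suc relpowp_0_E)
  then have "\<exists>w. P v w \<and> (P ^^ (?d v - 1)) w \<rho>" using dv relpowp_Suc_D2 by fastforce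
  then have pv: "P v (?p v)" "(P ^^ (?d v - 1)) (?p v) \<rho>"
    unfolding parent_def by (metis (mono_tags, lifting) someI_ex)+
  then show "P v (?p v)" by simp
  have "?d (?p v) \<le> ?d v - 1" using pv(2) unfolding root_dist_def by (rule Least_le)
  moreover have "(P ^^ ?d (?p v)) (?p v) \<rho>" using pv(2) unfolding root_dist_def by (metis LeastI)
  then have "(P ^^ Suc (?d (?p v))) v \<rho>" using pv(1) relpowp_Suc_I2 by metis
  then have "?d v \<le> Suc (?d (?p v))" unfolding root_dist_def by (rule Least_le)
  ultimately show "?d v = Suc (?d (?p v))" using k by simp
qed

lemma root_dist_root: "root_dist P \<rho> \<rho> = 0"
  unfolding root_dist_def by (rule Least_eq_0) simp

lemma finite_edges_in: "finite V \<Longrightarrow> finite (edges_in E V)"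
  by (rule finite_subset[of _ "V \<times> V"]) (auto simp: edges_in_def)

lemma edge_in_edges_in:
  "E a b \<Longrightarrow> E b a \<Longrightarrow> a \<noteq> b \<Longrightarrow> a \<in> V \<Longrightarrow> b \<in> V \<Longrightarrow> (min a b, max a b) \<in> edges_in E V"
  unfolding edges_in_def by (cases "a < b") (auto simp: min_def max_def)

text \<open>The edges to the parents give \<open>|V| - 1\<close> distinct edges of a connected graph; in a tree they
  are all its edges.\<close>

lemma parent_edges:
  assumes fin: "finite V" and \<rho>: "\<rho> \<in> V" and reach: "\<forall>v\<in>V. (adj_in E V)\<^sup>*\<^sup>* v \<rho>"
    and sym: "\<And>a b. E a b \<Longrightarrow> E b a"
  defines "p \<equiv> parent (adj_in E V) \<rho>"
  shows "card ((\<lambda>v. (min v (p v), max v (p v))) ` (V - {\<rho>})) = card V - 1"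
    and "(\<lambda>v. (min v (p v), max v (p v))) ` (V - {\<rho>}) \<subseteq> edges_in E V"
proof -
  let ?d = "root_dist (adj_in E V) \<rho>"
  have p: "adj_in E V v (p v)" "?d v = Suc (?d (p v))" if "v \<in> V" "v \<noteq> \<rho>" for v
    using parent_step[of "adj_in E V" v \<rho>] reach that unfolding p_def by auto
  have "inj_on (\<lambda>v. (min v (p v), max v (p v))) (V - {\<rho>})"
  proof (rule inj_onI, rule ccontr)
    fix v v' assume v: "v \<in> V - {\<rho>}" "v' \<in> V - {\<rho>}" "v \<noteq> v'"
      and "(min v (p v), max v (p v)) = (min v' (p v'), max v' (p v'))"
    then have e: "v = p v'" "v' = p v" by (auto simp: min_def max_def split: if_splits)
    have "?d v = Suc (?d v')" using p(2)[of v] v e(2) by simp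
    moreover have "?d v' = Suc (?d v)" using p(2)[of v'] v e(1) by simp
    ultimately show False by simp
  qed
  then show "card ((\<lambda>v. (min v (p v), max v (p v))) ` (V - {\<rho>})) = card V - 1"
    using card_image \<rho> fin by (simp add: card_image)
  show "(\<lambda>v. (min v (p v), max v (p v))) ` (V - {\<rho>}) \<subseteq> edges_in E V"
  proof (rule image_subsetI)
    fix v assume "v \<in> V - {\<rho>}"
    then have "adj_in E V v (p v)" "?d v = Suc (?d (p v))" using p[of v] by auto
    then have "adj_in E V v (p v)" "v \<noteq> p v" by (metis n_not_Suc_n)+
    then show "(min v (p v), max v (p v)) \<in> edges_in E V"
      using edge_in_edges_in[of E v "p v"] sym[of v "p v"] unfolding adj_in_def by blast
  qed
qed

lemma card_edges_in_ge:
  assumes "finite V" "\<rho> \<in> V" "\<forall>v\<in>V. (adj_in E V)\<^sup>*\<^sup>* v \<rho>" "\<And>a b. E a b \<Longrightarrow> E b a"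
  shows "card V - 1 \<le> card (edges_in E V)"
  using parent_edges(1)[OF assms] card_mono[OF finite_edges_in[OF assms(1)] parent_edges(2)[OF assms]]
  by simp

lemma tree_edge_parent:
  assumes fin: "finite V" and \<rho>: "\<rho> \<in> V" and reach: "\<forall>v\<in>V. (adj_in E V)\<^sup>*\<^sup>* v \<rho>"
    and sym: "\<And>a b. E a b \<Longrightarrow> E b a" and tree: "card (edges_in E V) = card V - 1"
    and ab: "a \<in> V" "b \<in> V" "E a b" "a \<noteq> b"
  defines "p \<equiv> parent (adj_in E V) \<rho>"
  shows "(a \<noteq> \<rho> \<and> b = p a) \<or> (b \<noteq> \<rho> \<and> a = p b)"
proof -
  note pe = parent_edges[OF fin \<rho> reach sym]
  have "(\<lambda>v. (min v (p v), max v (p v))) ` (V - {\<rho>}) = edges_in E V"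
    using card_subset_eq[OF finite_edges_in[OF fin] pe(2)] pe(1) tree unfolding p_def by simp
  moreover have "(min a b, max a b) \<in> edges_in E V" using edge_in_edges_in[of E a b V] ab sym[OF ab(3)] by blast
  ultimately have "(min a b, max a b) \<in> (\<lambda>v. (min v (p v), max v (p v))) ` (V - {\<rho>})" by simp
  then obtain v where v: "v \<in> V - {\<rho>}" "(min a b, max a b) = (min v (p v), max v (p v))"
    by (rule imageE)
  then have "{a, b} = {v, p v}" by (auto simp: min_def max_def split: if_splits)
  then show ?thesis using v(1) ab(4) by (auto simp: doubleton_eq_iff)
qed

lemma is_treeD:
  assumes "is_tree n E"
  shows "finite {0..<n}" "0 < n" "\<forall>u\<in>{0..<n}. \<forall>v\<in>{0..<n}. (adj_in E {0..<n})\<^sup>*\<^sup>* u v"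
    "\<And>a b. E a b \<Longrightarrow> E b a" "\<And>a b. E a b \<Longrightarrow> a < n \<and> b < n \<and> a \<noteq> b"
    "card (edges_in E {0..<n}) = card {0..<n} - 1"
  using assms unfolding is_tree_def is_tree_on_def simple_graph_def connected_in_iff by auto

text \<open>Edge counting: if \<open>a\<close> and \<open>b\<close> stayed connected after deleting the edge \<open>ab\<close>, the remaining
  connected graph would still need \<open>|V| - 1\<close> edges.\<close>

lemma tree_edge_bridge:
  assumes fin: "finite V" and conn: "\<forall>u\<in>V. \<forall>v\<in>V. (adj_in E V)\<^sup>*\<^sup>* u v"
    and sym: "\<And>x y. E x y \<Longrightarrow> E y x" and tree: "card (edges_in E V) = card V - 1"
    and ab: "a \<in> V" "b \<in> V" "E a b" "a \<noteq> b"
    and walk: "(adj_in (\<lambda>x y. E x y \<and> {x,y} \<noteq> {a,b}) V)\<^sup>*\<^sup>* a b"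
  shows False
proof -
  define E' where "E' = (\<lambda>x y. E x y \<and> {x,y} \<noteq> {a,b})"
  have sym': "\<And>x y. E' x y \<Longrightarrow> E' y x" unfolding E'_def using sym by (metis insert_commute)
  have ab': "(adj_in E' V)\<^sup>*\<^sup>* a b" using walk unfolding E'_def .
  have ba: "(adj_in E' V)\<^sup>*\<^sup>* b a" by (rule rtranclp_adj_in_sym[OF ab' sym'])
  have edge: "(adj_in E' V)\<^sup>*\<^sup>* x y" if "adj_in E V x y" for x y
  proof (cases "{x,y} = {a,b}")
    case True
    then show ?thesis using ab' ba by (auto simp: doubleton_eq_iff)
  next
    case False then show ?thesis using that unfolding adj_in_def E'_def by auto
  qed
  have "\<forall>v\<in>V. (adj_in E' V)\<^sup>*\<^sup>* v a"
  proof
    fix v assume "v \<in> V"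
    have "(adj_in E V)\<^sup>*\<^sup>* v a" using conn \<open>v \<in> V\<close> ab(1) by blast
    then show "(adj_in E' V)\<^sup>*\<^sup>* v a"
      by (induction rule: rtranclp_induct) (simp, metis rtranclp_trans edge)
  qed
  then have lower: "card V - 1 \<le> card (edges_in E' V)" by (rule card_edges_in_ge[of V a E', OF fin ab(1) _ sym'])
  have "edges_in E' V \<subseteq> edges_in E V - {(min a b, max a b)}"
  proof
    fix e assume "e \<in> edges_in E' V"
    then obtain i j where ij: "e = (i,j)" "i \<in> V" "j \<in> V" "i < j" "E i j" "{i,j} \<noteq> {a,b}"
      unfolding edges_in_def E'_def by auto
    then have "(i,j) \<noteq> (min a b, max a b)" by (auto simp: min_def max_def split: if_splits)
    then show "e \<in> edges_in E V - {(min a b, max a b)}" using ij unfolding edges_in_def by auto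
  qed
  moreover have "(min a b, max a b) \<in> edges_in E V" using edge_in_edges_in[of E a b V] ab sym[OF ab(3)] by blast
  ultimately have "card (edges_in E' V) < card (edges_in E V)"
    by (intro psubset_card_mono[OF finite_edges_in[OF fin]]) blast
  then show False using lower tree by linarith
qed

lemma tree_neighbours_separated:
  assumes tree: "is_tree n E" and ab: "E a b" and ar: "E a r" and br: "b \<noteq> r"
    and walk: "(adj_in E ({0..<n} - {a}))\<^sup>*\<^sup>* b r"
  shows False
proof -
  note T = is_treeD[OF tree]
  define E' where "E' = (\<lambda>x y. E x y \<and> {x,y} \<noteq> {a,b})"
  have sym': "\<And>x y. E' x y \<Longrightarrow> E' y x" unfolding E'_def using T(4) by (metis insert_commute)
  have lift: "adj_in E' {0..<n} x y" if "adj_in E ({0..<n} - {a}) x y" for x y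
    using that unfolding adj_in_def E'_def by (auto simp: doubleton_eq_iff)
  have "(adj_in E' {0..<n})\<^sup>*\<^sup>* b r"
    using walk by (induction rule: rtranclp_induct) (simp, metis lift rtranclp.rtrancl_into_rtrancl)
  moreover have "adj_in E' {0..<n} r a"
    using T(4)[OF ar] T(5)[OF ar] br unfolding adj_in_def E'_def by (auto simp: doubleton_eq_iff)
  ultimately have "(adj_in E' {0..<n})\<^sup>*\<^sup>* b a" by (rule rtranclp.rtrancl_into_rtrancl)
  then have "(adj_in E' {0..<n})\<^sup>*\<^sup>* a b" by (rule rtranclp_adj_in_sym[OF _ sym'])
  moreover have "a < n" "b < n" "a \<noteq> b" using T(5)[OF ab] by auto
  ultimately show False using tree_edge_bridge[OF T(1,3,4,6), of a b] ab unfolding E'_def by simp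
qed

text \<open>In a tree, a vertex of \<open>U - set qs\<close> reachable from \<open>qs ! i\<close> avoiding the rest of the
  induced path \<open>qs\<close> is adjacent to no other path vertex: otherwise it would join two neighbours
  of that path vertex in the tree with the vertex deleted.\<close>

lemma branch_attached_once:
  assumes tree: "is_tree n E" and U: "U \<subseteq> {0..<n}"
    and distinct: "distinct qs" and qs_U: "set qs \<subseteq> U"
    and induced: "\<And>k l. k < length qs \<Longrightarrow> l < length qs \<Longrightarrow>
        E (qs ! k) (qs ! l) \<longleftrightarrow> (l = Suc k \<or> k = Suc l)"
    and i: "i < length qs" and j: "j < length qs"
    and r: "r \<in> U - set qs" "(adj_in E (U - set qs \<union> {qs ! i}))\<^sup>*\<^sup>* (qs ! i) r"
    and e: "E (qs ! j) r"
  shows "j = i"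
proof (rule ccontr)
  assume ji: "j \<noteq> i"
  let ?V = "{0..<n} - {qs ! j}"
  note T = is_treeD[OF tree]
  have qs_less: "qs ! t < n" if "t < length qs" for t using that qs_U U nth_mem by fastforce
  have qs_ne: "qs ! t \<noteq> qs ! j" if "t < length qs" "t \<noteq> j" for t
    using distinct that j nth_eq_iff_index_eq by blast
  have segment: "(adj_in E ?V)\<^sup>*\<^sup>* (qs ! k) (qs ! l)"
    if kl: "k \<le> l" "l < length qs" "j < k \<or> l < j" for k l
  proof (rule rtranclp_path_segment[OF _ kl(1)])
    fix t assume "k \<le> t" "t < l"
    then show "adj_in E ?V (qs ! t) (qs ! Suc t)"
      using kl induced[of t "Suc t"] qs_less qs_ne[of t] qs_ne[of "Suc t"] unfolding adj_in_def by auto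
  qed
  obtain b where b: "E (qs ! j) b" "(adj_in E ?V)\<^sup>*\<^sup>* b (qs ! i)" "b \<in> set qs"
  proof (cases "i < j")
    case True
    then have "(adj_in E ?V)\<^sup>*\<^sup>* (qs ! (j - 1)) (qs ! i)"
      using rtranclp_adj_in_sym[OF segment[of i "j - 1"] T(4)] j by auto
    moreover have "E (qs ! j) (qs ! (j - 1))" using induced[of j "j - 1"] True j by auto
    ultimately show ?thesis using that j by auto
  next
    case False
    then have "(adj_in E ?V)\<^sup>*\<^sup>* (qs ! Suc j) (qs ! i)" using segment[of "Suc j" i] i ji by auto
    moreover have "E (qs ! j) (qs ! Suc j)" using induced[of j "Suc j"] False i ji by auto
    ultimately show ?thesis using that False i ji by auto
  qed
  have "U - set qs \<union> {qs ! i} \<subseteq> ?V" using U qs_ne[OF i] qs_less[OF i] ji nth_mem[OF j] by auto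
  then have "(adj_in E ?V)\<^sup>*\<^sup>* (qs ! i) r" by (rule rtranclp_adj_in_mono[OF _ r(2)])
  with b(2) have "(adj_in E ?V)\<^sup>*\<^sup>* b r" by (rule rtranclp_trans)
  moreover have "b \<noteq> r" using b(3) r(1) by auto
  ultimately show False using tree_neighbours_separated[OF tree b(1) e] by blast
qed

section \<open>Nullity and path covers of trees\<close>

lemma local_nullity_remove_induced_path:
  fixes M :: "'a::field mat"
  assumes tree: "is_tree n E" and M: "M \<in> carrier_mat n n"
    and pattern: "\<And>u w. u < n \<Longrightarrow> w < n \<Longrightarrow> u \<noteq> w \<Longrightarrow> M $$ (u,w) \<noteq> 0 \<longleftrightarrow> E u w"
    and U: "U \<subseteq> {0..<n}" and Q: "Q \<subseteq> U" "induced_path E Q"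
  shows "local_nullity M n U \<le> local_nullity M n (U - Q) + 1"
proof -
  note T = is_treeD[OF tree]
  obtain qs where qs: "qs \<noteq> []" "distinct qs" "set qs = Q" and
    induced: "\<And>k l. k < length qs \<Longrightarrow> l < length qs \<Longrightarrow>
      E (qs ! k) (qs ! l) \<longleftrightarrow> (l = Suc k \<or> k = Suc l)"
    using Q(2) unfolding induced_path_def by blast
  define Rs where "Rs = (\<lambda>i. {r \<in> U - set qs. (adj_in E (U - set qs \<union> {qs ! i}))\<^sup>*\<^sup>* (qs ! i) r})"
  interpret path_removal M n U E qs Rs
  proof unfold_locales
    show "set qs \<subseteq> U" using qs Q by auto
    show "M $$ (qs ! k, qs ! Suc k) \<noteq> 0" if k: "Suc k < length qs" for k
    proof -
      have "qs ! k \<noteq> qs ! Suc k" using qs(2) k nth_eq_iff_index_eq by fastforce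
      moreover have "qs ! Suc k < n" "qs ! k < n" using k qs Q U nth_mem by fastforce+
      ultimately show ?thesis using pattern induced[of k "Suc k"] k by simp
    qed
    show "\<not> E u w" if i: "i < length qs" and u: "u \<in> Rs i" and w: "w \<in> U - set qs - Rs i" for i u w
    proof
      assume "E u w"
      then have "adj_in E (U - set qs \<union> {qs ! i}) u w" using u w unfolding adj_in_def Rs_def by auto
      then show False using u w unfolding Rs_def by (auto intro: rtranclp.rtrancl_into_rtrancl)
    qed
    show "\<not> E (qs ! j) r" if "i < length qs" "j < length qs" "j \<noteq> i" "r \<in> Rs i" for i j r
      using branch_attached_once[OF tree U qs(2) _ induced] that qs Q unfolding Rs_def by blast
    show "r \<in> Rs j" if "j < length qs" "r \<in> U - set qs" "E (qs ! j) r" for j r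
      using that unfolding Rs_def adj_in_def by (auto intro: r_into_rtranclp)
    show "E w u" if "E u w" for u w using T(4)[OF that] .
    show "M $$ (u, w) = 0" if "u < n" "w < n" "u \<noteq> w" "\<not> E u w" for u w using pattern that by blast
  qed (use M U qs induced Rs_def in auto)
  show ?thesis using local_nullity_le qs(3) by simp
qed

lemma local_nullity_path_cover:
  fixes M :: "'a::field mat"
  assumes tree: "is_tree n E" and M: "M \<in> carrier_mat n n"
    and pattern: "\<And>u w. u < n \<Longrightarrow> w < n \<Longrightarrow> u \<noteq> w \<Longrightarrow> M $$ (u,w) \<noteq> 0 \<longleftrightarrow> E u w"
    and X: "X \<subseteq> {0..<n}" and cover: "path_cover E S C" "finite C" "S \<subseteq> {0..<n}" "X \<inter> S = {}"
  shows "local_nullity M n (X \<union> S) \<le> local_nullity M n X + card C"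
  using cover(2,1,3,4)
proof (induction C arbitrary: S rule: finite_induct)
  case empty then show ?case by (simp add: path_cover_def)
next
  case (insert Q C)
  have "Q \<inter> Q' = {}" if "Q' \<in> C" for Q'
    using insert.prems(1) insert.hyps(2) that unfolding path_cover_def by (metis insertCI)
  then have Q: "induced_path E Q" "Q \<inter> \<Union>C = {}"
    using insert.prems(1) unfolding path_cover_def by auto
  have S: "S = Q \<union> \<Union>C" using insert.prems(1) unfolding path_cover_def by auto
  have "path_cover E (\<Union>C) C" using insert.prems(1) unfolding path_cover_def by blast
  then have IH: "local_nullity M n (X \<union> \<Union>C) \<le> local_nullity M n X + card C"
    by (rule insert.IH) (use insert.prems(2,3) S in auto)
  have "local_nullity M n (X \<union> S) \<le> local_nullity M n (X \<union> S - Q) + 1"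
    by (rule local_nullity_remove_induced_path[OF tree M pattern]) (use X insert.prems(2) S Q in auto)
  moreover have "X \<union> S - Q = X \<union> \<Union>C" using S Q insert.prems(3) by auto
  ultimately show ?case using IH insert.hyps by simp
qed

lemma path_cover_number_attained:
  assumes "finite S" "\<And>v. \<not> E v v"
  shows "\<exists>C. path_cover E S C \<and> finite C \<and> card C = path_cover_number E S"
proof -
  have "path_cover E S ((\<lambda>v. {v}) ` S)"
    unfolding path_cover_def induced_path_def
    by (auto intro!: exI[where x="[_]"] simp: assms(2))
  then have "\<exists>k C. path_cover E S C \<and> finite C \<and> card C = k" using assms(1) by blast
  then show ?thesis unfolding path_cover_number_def by (rule LeastI_ex)
qed

lemma local_kernel_union_trivial:
  fixes M :: "'a::field mat"
  assumes M: "M \<in> carrier_mat n n"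
    and pattern: "\<And>u w. u < n \<Longrightarrow> w < n \<Longrightarrow> u \<noteq> w \<Longrightarrow> \<not> E u w \<Longrightarrow> M $$ (u,w) = 0"
    and indep: "\<And>i j. i < c \<Longrightarrow> j < c \<Longrightarrow> i \<noteq> j \<Longrightarrow> independent E (Ts i) (Ts j)"
    and triv: "\<And>i. i < c \<Longrightarrow> local_kernel M n (Ts i) = {0\<^sub>v n}"
  shows "local_kernel M n (\<Union>i<c. Ts i) = {0\<^sub>v n}"
proof (intro equalityI subsetI)
  fix x assume x: "x \<in> local_kernel M n (\<Union>i<c. Ts i)"
  then have xc: "x \<in> carrier_vec n" unfolding local_kernel_def by auto
  have restrict: "restrict_vec n (Ts i) x \<in> local_kernel M n (Ts i)" if i: "i < c" for i
    unfolding local_kernel_def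
  proof (intro CollectI conjI allI impI)
    fix u assume u: "u < n" "u \<in> Ts i"
    have "(M *\<^sub>v restrict_vec n (Ts i) x) $ u = (M *\<^sub>v x) $ u"
    proof (rule mult_restrict_vec_index[OF M xc u(1)])
      fix w assume w: "w < n" "w \<notin> Ts i"
      show "M $$ (u, w) = 0 \<or> x $ w = 0"
      proof (cases "\<exists>j<c. w \<in> Ts j")
        case True
        then obtain j where "j < c" "w \<in> Ts j" "j \<noteq> i" using w by blast
        then have "\<not> E u w" "u \<noteq> w" using indep[OF i] u unfolding independent_def by blast+
        then show ?thesis using pattern u(1) w(1) by blast
      qed (use x w in \<open>auto simp: local_kernel_def\<close>)
    qed
    then show "(M *\<^sub>v restrict_vec n (Ts i) x) $ u = 0" using x u i unfolding local_kernel_def by auto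
  qed auto
  have "x $ u = 0" if u: "u < n" for u
  proof (cases "\<exists>i<c. u \<in> Ts i")
    case True
    then obtain i where i: "i < c" "u \<in> Ts i" by blast
    then have "restrict_vec n (Ts i) x = 0\<^sub>v n" using restrict triv by blast
    then have "restrict_vec n (Ts i) x $ u = 0" using u by simp
    then show ?thesis using u i(2) by simp
  qed (use x u in \<open>auto simp: local_kernel_def\<close>)
  then show "x \<in> {0\<^sub>v n}" using xc by auto
qed (use M in \<open>auto simp: local_kernel_def\<close>)

theorem kernel_dim_le_path_cover_number:
  fixes M :: "'a::field mat"
  assumes tree: "is_tree n E" and M: "M \<in> carrier_mat n n"
    and pattern: "\<And>u w. u < n \<Longrightarrow> w < n \<Longrightarrow> u \<noteq> w \<Longrightarrow> M $$ (u,w) \<noteq> 0 \<longleftrightarrow> E u w"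
    and sub: "\<And>i. i < c \<Longrightarrow> is_subtree n E (Ts i)"
    and indep: "\<And>i j. i < c \<Longrightarrow> j < c \<Longrightarrow> i \<noteq> j \<Longrightarrow> independent E (Ts i) (Ts j)"
    and triv: "\<And>i. i < c \<Longrightarrow> local_kernel M n (Ts i) = {0\<^sub>v n}"
  shows "kernel_dim M \<le> path_cover_number E ({0..<n} - (\<Union>i<c. Ts i))"
proof -
  let ?X = "\<Union>i<c. Ts i"
  have X: "?X \<subseteq> {0..<n}" using sub unfolding is_subtree_def by auto
  obtain C where C: "path_cover E ({0..<n} - ?X) C" "finite C"
      "card C = path_cover_number E ({0..<n} - ?X)"
    using path_cover_number_attained is_treeD(5)[OF tree] by blast
  have "?X \<union> ({0..<n} - ?X) = {0..<n}" using X by auto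
  then have "kernel_dim M = local_nullity M n (?X \<union> ({0..<n} - ?X))"
    using local_nullity_all[OF M] by simp
  also have "\<dots> \<le> local_nullity M n ?X + card C"
    by (rule local_nullity_path_cover[OF tree M pattern X C(1,2)]) auto
  also have "local_nullity M n ?X = 0"
  proof (rule local_nullity_eq_0[OF M], rule local_kernel_union_trivial[OF M _ indep triv])
    show "M $$ (u, w) = 0" if "u < n" "w < n" "u \<noteq> w" "\<not> E u w" for u w using pattern that by blast
  qed
  finally show ?thesis using C(3) by simp
qed

lemma bij_betw_pick:
  assumes "finite T"
  shows "bij_betw (pick T) {..<card T} T"
proof (rule bij_betw_imageI)
  show "inj_on (pick T) {..<card T}"
    by (rule inj_onI) (metis card_pick_le lessThan_iff)
  show "pick T ` {..<card T} = T"
  proof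
    show "pick T ` {..<card T} \<subseteq> T" using pick_in_set_le by auto
    show "T \<subseteq> pick T ` {..<card T}"
    proof
      fix t assume t: "t \<in> T"
      have "card {a \<in> T. a < t} < card T"
        using t assms by (intro psubset_card_mono) auto
      then show "t \<in> pick T ` {..<card T}" using pick_card_in_set[OF t] by force
    qed
  qed
qed

lemma principal_submatrix_carrier:
  assumes "A \<in> carrier_mat n n" "T \<subseteq> {0..<n}"
  shows "principal_submatrix A T \<in> carrier_mat (card T) (card T)"
proof -
  have "{i. i < n \<and> i \<in> T} = T" using assms(2) by auto
  then show ?thesis using assms(1) unfolding principal_submatrix_def carrier_mat_def
    by (simp add: dim_submatrix)
qed

lemma principal_submatrix_mult_pick:
  fixes M :: "'a::field mat"
  assumes M: "M \<in> carrier_mat n n" and T: "T \<subseteq> {0..<n}" and x: "x \<in> carrier_vec n"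
    and supp: "\<And>u. u < n \<Longrightarrow> u \<notin> T \<Longrightarrow> x $ u = 0" and i: "i < card T"
  shows "(principal_submatrix M T *\<^sub>v vec (card T) (\<lambda>j. x $ pick T j)) $ i = (M *\<^sub>v x) $ pick T i"
proof -
  have finT: "finite T" using T finite_subset by blast
  have rows: "{i. i < dim_row M \<and> i \<in> T} = T" "{i. i < dim_col M \<and> i \<in> T} = T" using M T by auto
  have pick: "pick T i < n" using pick_in_set_le[OF i] T by auto
  have "(principal_submatrix M T *\<^sub>v vec (card T) (\<lambda>j. x $ pick T j)) $ i =
      (\<Sum>j<card T. M $$ (pick T i, pick T j) * x $ pick T j)"
    using principal_submatrix_carrier[OF M T] i
    by (simp add: principal_submatrix_def submatrix_def rows scalar_prod_def lessThan_atLeast0 row_def)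
  also have "\<dots> = (\<Sum>t\<in>T. M $$ (pick T i, t) * x $ t)"
    using sum.reindex_bij_betw[OF bij_betw_pick[OF finT]] by simp
  also have "\<dots> = (\<Sum>t<n. M $$ (pick T i, t) * x $ t)"
    by (rule sum.mono_neutral_left) (use T supp in auto)
  also have "\<dots> = (M *\<^sub>v x) $ pick T i" using mult_mat_vec_index_sum[OF M x pick] by simp
  finally show ?thesis .
qed

text \<open>A nonzero vector of \<open>local_kernel M n T\<close>, read through \<open>pick T\<close>, is a kernel vector of \<open>M[T]\<close>.\<close>

lemma det_principal_submatrix_eq_0:
  fixes M :: "'a::field mat"
  assumes M: "M \<in> carrier_mat n n" and T: "T \<subseteq> {0..<n}"
    and x: "x \<in> local_kernel M n T" "x \<noteq> 0\<^sub>v n"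
  shows "det (principal_submatrix M T) = 0"
proof -
  have finT: "finite T" using T finite_subset by blast
  have xc: "x \<in> carrier_vec n" and supp: "\<And>u. u < n \<Longrightarrow> u \<notin> T \<Longrightarrow> x $ u = 0"
    and Mx: "\<And>u. u \<in> T \<Longrightarrow> (M *\<^sub>v x) $ u = 0"
    using x(1) T unfolding local_kernel_def by auto
  define y where "y = vec (card T) (\<lambda>j. x $ pick T j)"
  have "principal_submatrix M T *\<^sub>v y = 0\<^sub>v (card T)"
    using principal_submatrix_mult_pick[OF M T xc supp] Mx pick_in_set_le principal_submatrix_carrier[OF M T]
    unfolding y_def by (intro eq_vecI) auto
  moreover have "y \<noteq> 0\<^sub>v (card T)"
  proof
    assume y0: "y = 0\<^sub>v (card T)"
    have "x $ u = 0" if "u < n" for u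
    proof (cases "u \<in> T")
      case True
      have "card {a \<in> T. a < u} < card T" using True finT by (intro psubset_card_mono) auto
      then show ?thesis using arg_cong[OF y0, of "\<lambda>v. v $ card {a \<in> T. a < u}"] pick_card_in_set[OF True]
        unfolding y_def by simp
    qed (use supp that in auto)
    then show False using x(2) xc by auto
  qed
  moreover have "y \<in> carrier_vec (card T)" unfolding y_def by simp
  ultimately show ?thesis using det_0_iff_vec_prod_zero[OF principal_submatrix_carrier[OF M T]] by blast
qed

theorem principal_submatrix_singular:
  fixes M :: "'a::field mat"
  assumes tree: "is_tree n E" and M: "M \<in> carrier_mat n n"
    and pattern: "\<And>u w. u < n \<Longrightarrow> w < n \<Longrightarrow> u \<noteq> w \<Longrightarrow> M $$ (u,w) \<noteq> 0 \<longleftrightarrow> E u w"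
    and sub: "\<And>i. i < c \<Longrightarrow> is_subtree n E (Ts i)"
    and indep: "\<And>i j. i < c \<Longrightarrow> j < c \<Longrightarrow> i \<noteq> j \<Longrightarrow> independent E (Ts i) (Ts j)"
    and big: "kernel_dim M > path_cover_number E ({0..<n} - (\<Union>i<c. Ts i))"
  shows "\<exists>i<c. det (principal_submatrix M (Ts i)) = 0"
proof -
  obtain i where i: "i < c" "local_kernel M n (Ts i) \<noteq> {0\<^sub>v n}"
    using kernel_dim_le_path_cover_number[OF tree M pattern sub indep] big by force
  moreover have "0\<^sub>v n \<in> local_kernel M n (Ts i)" using M unfolding local_kernel_def by auto
  ultimately obtain x where "x \<in> local_kernel M n (Ts i)" "x \<noteq> 0\<^sub>v n" by blast
  moreover have "Ts i \<subseteq> {0..<n}" using sub[OF i(1)] unfolding is_subtree_def by simp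
  ultimately show ?thesis using det_principal_submatrix_eq_0[OF M] i(1) by blast
qed

section \<open>Symmetrizable matrices\<close>

lemma parent_path_product:
  fixes r :: "nat \<Rightarrow> real"
  assumes reach: "\<forall>v\<in>V. (adj_in E V)\<^sup>*\<^sup>* v \<rho>" and r_pos: "\<And>v. v \<in> V \<Longrightarrow> v \<noteq> \<rho> \<Longrightarrow> r v > 0"
  defines "d \<equiv> root_dist (adj_in E V) \<rho>" and "p \<equiv> parent (adj_in E V) \<rho>"
  shows "\<And>v. v \<in> V \<Longrightarrow> (\<Prod>k<d v. r ((p ^^ k) v)) > 0"
    and "\<And>v. v \<in> V \<Longrightarrow> v \<noteq> \<rho> \<Longrightarrow> (\<Prod>k<d v. r ((p ^^ k) v)) = r v * (\<Prod>k<d (p v). r ((p ^^ k) (p v)))"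
proof -
  have step: "adj_in E V v (p v)" "d v = Suc (d (p v))" if "v \<in> V" "v \<noteq> \<rho>" for v
    using parent_step[of "adj_in E V" v \<rho>] reach that unfolding d_def p_def by auto
  have d_root: "d \<rho> = 0" unfolding d_def by (rule root_dist_root)
  have iter: "(p ^^ k) v \<in> V \<and> d ((p ^^ k) v) = d v - k" if v: "v \<in> V" and "k \<le> d v" for v k
    using that(2)
  proof (induction k)
    case (Suc k)
    let ?w = "(p ^^ k) v"
    have w: "?w \<in> V" "d ?w = d v - k" using Suc by auto
    then have "?w \<noteq> \<rho>" using d_root Suc.prems by auto
    then show ?case using step[OF w(1)] w unfolding adj_in_def by auto
  qed (use v in simp)
  show "(\<Prod>k<d v. r ((p ^^ k) v)) > 0" if v: "v \<in> V" for v
  proof (rule prod_pos)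
    fix k assume "k \<in> {..<d v}"
    then have "(p ^^ k) v \<in> V" "(p ^^ k) v \<noteq> \<rho>" using iter[OF v, of k] d_root by auto
    then show "r ((p ^^ k) v) > 0" by (rule r_pos)
  qed
  show "(\<Prod>k<d v. r ((p ^^ k) v)) = r v * (\<Prod>k<d (p v). r ((p ^^ k) (p v)))"
    if "v \<in> V" "v \<noteq> \<rho>" for v
    unfolding step(2)[OF that] prod.lessThan_Suc_shift by (simp add: funpow_swap1)
qed

text \<open>A matrix in \<open>\<R>(T)\<close> is diagonally similar to a symmetric one: weights \<open>g\<close> with
  \<open>g u A(u,w) = g w A(w,u)\<close> are built by rooting the tree at \<open>0\<close> and multiplying the ratios
  \<open>A(p,v) / A(v,p)\<close> along the way to the root.\<close>

lemma in_R_symmetrizable: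
  fixes A :: "real mat"
  assumes tree: "is_tree n E" and AR: "in_R n E A"
  obtains g :: "nat \<Rightarrow> real" where "\<And>u. u < n \<Longrightarrow> g u > 0"
    and "\<And>u w. u < n \<Longrightarrow> w < n \<Longrightarrow> g u * A $$ (u,w) = g w * A $$ (w,u)"
proof -
  note T = is_treeD[OF tree]
  let ?V = "{0..<n}"
  define p where "p = parent (adj_in E ?V) 0"
  define d where "d = root_dist (adj_in E ?V) 0"
  have reach: "\<forall>v\<in>?V. (adj_in E ?V)\<^sup>*\<^sup>* v 0" using T(2,3) by auto
  have pattern: "\<And>i j. i < n \<Longrightarrow> j < n \<Longrightarrow> i \<noteq> j \<Longrightarrow> A $$ (i,j) \<noteq> 0 \<longleftrightarrow> E i j"
    and sign: "\<And>i j. i < n \<Longrightarrow> j < n \<Longrightarrow> E i j \<Longrightarrow> A $$ (i,j) * A $$ (j,i) > 0"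
    using AR unfolding in_R_def by auto
  have edge: "p v < n" "A $$ (v, p v) * A $$ (p v, v) > 0" if "v < n" "v \<noteq> 0" for v
    using parent_step(1)[of "adj_in E ?V" v 0] reach sign[of v "p v"] that
    unfolding p_def adj_in_def by auto
  define r where "r = (\<lambda>v. A $$ (p v, v) / A $$ (v, p v))"
  have r_pos: "r v > 0" if "v \<in> ?V" "v \<noteq> 0" for v
    using edge[of v] that unfolding r_def by (auto simp: zero_less_mult_iff zero_less_divide_iff)
  define g where "g = (\<lambda>v. \<Prod>k<d v. r ((p ^^ k) v))"
  note prod = parent_path_product[where r=r and \<rho>=0, OF reach r_pos, folded p_def d_def]
  have g_edge: "g v * A $$ (v, p v) = g (p v) * A $$ (p v, v)" if "v < n" "v \<noteq> 0" for v
  proof -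
    have "g v = r v * g (p v)" using prod(2) that unfolding g_def by simp
    then show ?thesis using edge[OF that] unfolding r_def by (auto simp: field_simps)
  qed
  have "g u * A $$ (u,w) = g w * A $$ (w,u)" if u: "u < n" and w: "w < n" for u w
  proof (cases "u \<noteq> w \<and> E u w")
    case True
    then have "(u \<noteq> 0 \<and> w = p u) \<or> (w \<noteq> 0 \<and> u = p w)"
      using tree_edge_parent[OF T(1) _ reach T(4) T(6)] u w T(2) unfolding p_def by auto
    then show ?thesis using g_edge u w by auto
  next
    case False
    moreover have "\<not> E w u" if "\<not> E u w" using T(4) that by blast
    ultimately show ?thesis using pattern[OF u w] pattern[OF w u] by (cases "u = w") auto
  qed
  moreover have "g u > 0" if "u < n" for u using prod(1) that unfolding g_def by simp
  ultimately show ?thesis using that by blast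
qed

lemma order_prod_linear_powers:
  fixes L :: "(nat \<times> 'a::idom) list"
  shows "Polynomial.order \<nu> (\<Prod>(n,a)\<leftarrow>L. [:- a, 1:] ^ n) = sum_list (map fst [(n,a)\<leftarrow>L. a = \<nu>])"
proof (induction L)
  case Nil
  have "Polynomial.order \<nu> (1::'a poly) = 0" by (rule order_0I) simp
  then show ?case by simp
next
  case (Cons na L)
  obtain n a where na: "na = (n,a)" by fastforce
  let ?P = "(\<Prod>(n,a)\<leftarrow>L. [:- a, 1:] ^ n)"
  have nz1: "[:- a, 1:] ^ n \<noteq> 0" by simp
  have nz2: "?P \<noteq> 0" by (induction L) auto
  have "Polynomial.order \<nu> ([:- a, 1:] ^ n * ?P) = Polynomial.order \<nu> ([:- a, 1:] ^ n) + Polynomial.order \<nu> ?P"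
    using nz1 nz2 by (simp add: order_mult)
  moreover have "Polynomial.order \<nu> ([:- a, 1:] ^ n) = (if a = \<nu> then n else 0)"
  proof (cases "a = \<nu>")
    case True then show ?thesis using order_power_n_n by simp
  next
    case False
    have "poly ([:- a, 1:] ^ n) \<nu> \<noteq> 0" using False by (simp add: poly_power)
    then show ?thesis using False order_0I by metis
  qed
  ultimately show ?case using Cons na by simp
qed

lemma weighted_sum_self_adjoint:
  fixes B :: "nat \<Rightarrow> nat \<Rightarrow> real" and g :: "nat \<Rightarrow> real" and x y :: "complex vec"
  assumes sym: "\<And>u w. u < n \<Longrightarrow> w < n \<Longrightarrow> g u * B u w = g w * B w u"
  shows "(\<Sum>u<n. of_real (g u) * (cnj (y $ u) * (\<Sum>w<n. of_real (B u w) * x $ w))) =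
    (\<Sum>w<n. of_real (g w) * x $ w * cnj (\<Sum>u<n. of_real (B w u) * y $ u))"
proof -
  have "(\<Sum>u<n. of_real (g u) * (cnj (y $ u) * (\<Sum>w<n. of_real (B u w) * x $ w))) =
      (\<Sum>u<n. \<Sum>w<n. of_real (g u * B u w) * (cnj (y $ u) * x $ w))"
    by (simp add: sum_distrib_left algebra_simps)
  also have "\<dots> = (\<Sum>w<n. \<Sum>u<n. of_real (g u * B u w) * (cnj (y $ u) * x $ w))"
    by (rule sum.swap)
  also have "\<dots> = (\<Sum>w<n. of_real (g w) * x $ w * cnj (\<Sum>u<n. of_real (B w u) * y $ u))"
    by (intro sum.cong refl) (simp add: sym sum_distrib_left algebra_simps)
  finally show ?thesis .
qed

lemma weighted_norm_eq_0:
  fixes g :: "nat \<Rightarrow> real" and y :: "complex vec"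
  assumes g_pos: "\<And>u. u < n \<Longrightarrow> g u > 0"
    and zero: "(\<Sum>u<n. of_real (g u) * (cnj (y $ u) * y $ u)) = 0"
    and u: "u < n"
  shows "y $ u = 0"
proof -
  have "(complex_of_real (cmod z))\<^sup>2 = cnj z * z" for z
    using complex_norm_square[of z] by (simp add: mult.commute)
  then have "(\<Sum>u<n. of_real (g u) * (cnj (y $ u) * y $ u)) = complex_of_real (\<Sum>u<n. g u * (cmod (y $ u))\<^sup>2)"
    by simp
  with zero have "complex_of_real (\<Sum>u<n. g u * (cmod (y $ u))\<^sup>2) = 0" by argo
  then have "(\<Sum>u<n. g u * (cmod (y $ u))\<^sup>2) = 0" by (simp only: of_real_eq_0_iff)
  then have "g u * (cmod (y $ u))\<^sup>2 = 0"
    using sum_nonneg_eq_0_iff[of "{..<n}" "\<lambda>u. g u * (cmod (y $ u))\<^sup>2"] g_pos u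
    by (simp add: less_imp_le)
  then show ?thesis using g_pos[OF u] by simp
qed

text \<open>For \<open>y = C x\<close> with \<open>C y = 0\<close>, the weighted sum \<open>\<Sum>u. g u |y u|\<^sup>2\<close> vanishes by
  self-adjointness, so \<open>y = 0\<close>: \<open>C\<close> has no Jordan chains of length two.\<close>

lemma symmetrizable_char_matrix_no_chain:
  fixes A :: "real mat" and g :: "nat \<Rightarrow> real" and \<mu> :: real
  assumes A: "A \<in> carrier_mat n n" and g_pos: "\<And>u. u < n \<Longrightarrow> g u > 0"
    and g_sym: "\<And>u w. u < n \<Longrightarrow> w < n \<Longrightarrow> g u * A $$ (u,w) = g w * A $$ (w,u)"
    and x: "x \<in> carrier_vec n"
  defines C: "C \<equiv> char_matrix (map_mat complex_of_real A) (complex_of_real \<mu>)"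
  assumes CCx: "C *\<^sub>v (C *\<^sub>v x) = 0\<^sub>v n"
  shows "C *\<^sub>v x = 0\<^sub>v n"
proof -
  define B where "B = (\<lambda>u w. A $$ (u,w) - (if u = w then \<mu> else 0))"
  have Cc: "C \<in> carrier_mat n n" using A unfolding C by simp
  have C_index: "(C *\<^sub>v v) $ u = (\<Sum>w<n. of_real (B u w) * v $ w)" if "v \<in> carrier_vec n" "u < n" for v u
    using mult_mat_vec_index_sum[OF Cc that] that A unfolding C B_def char_matrix_def
    by (auto intro!: sum.cong)
  have B_sym: "g u * B u w = g w * B w u" if "u < n" "w < n" for u w
    using g_sym[OF that] unfolding B_def by (auto simp: algebra_simps)
  define y where "y = C *\<^sub>v x"
  have yc: "y \<in> carrier_vec n" unfolding y_def using Cc x by simp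
  have "(\<Sum>u<n. of_real (g u) * (cnj (y $ u) * y $ u)) =
      (\<Sum>w<n. of_real (g w) * x $ w * cnj ((C *\<^sub>v y) $ w))"
    using weighted_sum_self_adjoint[of n g B y x, OF B_sym] C_index[OF x] C_index[OF yc]
    unfolding y_def[symmetric] by simp
  also have "\<dots> = 0" using CCx unfolding y_def by simp
  finally have "(\<Sum>u<n. of_real (g u) * (cnj (y $ u) * y $ u)) = 0" .
  then have "y $ u = 0" if "u < n" for u using weighted_norm_eq_0[of n g y u] g_pos that by blast
  then show ?thesis using yc Cc unfolding y_def by (intro eq_vecI) auto
qed

lemma mat_kernel_power_eq:
  fixes C :: "'a::field mat"
  assumes C: "C \<in> carrier_mat n n"
    and nc: "\<And>x. x \<in> carrier_vec n \<Longrightarrow> C *\<^sub>v (C *\<^sub>v x) = 0\<^sub>v n \<Longrightarrow> C *\<^sub>v x = 0\<^sub>v n"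
    and k: "1 \<le> k"
  shows "mat_kernel (C ^\<^sub>m k) = mat_kernel C"
  using k
proof (induction k rule: dec_induct)
  case base
  have "C ^\<^sub>m 1 = C" using C by simp
  then show ?case by simp
next
  case (step k)
  have Ck: "C ^\<^sub>m k \<in> carrier_mat n n" using C by simp
  have CS: "C ^\<^sub>m Suc k \<in> carrier_mat n n" using C by (rule pow_carrier_mat)
  show ?case
  proof (rule Set.set_eqI)
    fix x
    show "x \<in> mat_kernel (C ^\<^sub>m Suc k) \<longleftrightarrow> x \<in> mat_kernel C"
    proof (cases "x \<in> carrier_vec n")
      case False then show ?thesis using mat_kernel[OF CS] mat_kernel[OF C] by auto
    next
      case x: True
      have Cx: "C *\<^sub>v x \<in> carrier_vec n" using C x by simp
      have "x \<in> mat_kernel (C ^\<^sub>m Suc k) \<longleftrightarrow> (C ^\<^sub>m k) *\<^sub>v (C *\<^sub>v x) = 0\<^sub>v n"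
        using mat_kernel[OF CS] x C Ck by (simp add: assoc_mult_mat_vec[OF Ck C x])
      also have "\<dots> \<longleftrightarrow> C *\<^sub>v x \<in> mat_kernel (C ^\<^sub>m k)" using mat_kernel[OF Ck] Cx by simp
      also have "\<dots> \<longleftrightarrow> C *\<^sub>v (C *\<^sub>v x) = 0\<^sub>v n" using step.IH mat_kernel[OF C] Cx by simp
      also have "\<dots> \<longleftrightarrow> C *\<^sub>v x = 0\<^sub>v n" using nc[OF x] C x by auto
      also have "\<dots> \<longleftrightarrow> x \<in> mat_kernel C" using mat_kernel[OF C] x by simp
      finally show ?thesis .
    qed
  qed
qed

lemma order_char_poly_le_kernel_dim:
  fixes B :: "complex mat"
  assumes B: "B \<in> carrier_mat n n"
    and no_chain: "\<And>x. x \<in> carrier_vec n \<Longrightarrow> char_matrix B e *\<^sub>v (char_matrix B e *\<^sub>v x) = 0\<^sub>v n \<Longrightarrow>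
        char_matrix B e *\<^sub>v x = 0\<^sub>v n"
  shows "Polynomial.order e (char_poly B) \<le> kernel_dim (char_matrix B e)"
proof -
  let ?C = "char_matrix B e"
  obtain as where "char_poly B = (\<Prod>a\<leftarrow>as. [:- a, 1:])" using char_poly_factorized[OF B] by blast
  from jordan_nf_exists[OF B this] obtain n_as where jnf: "jordan_nf B n_as" by blast
  let ?L = "map fst [(n,a)\<leftarrow>n_as. a = e]"
  define K where "K = sum_list (map fst n_as) + 1"
  have "Polynomial.order e (char_poly B) = sum_list ?L"
    unfolding jordan_nf_char_poly[OF jnf] order_prod_linear_powers ..
  also have "\<dots> = (\<Sum>m\<leftarrow>?L. min K m)"
  proof -
    have "m \<le> K" if "m \<in> set ?L" for m
    proof -
      have "m \<in> set (map fst n_as)" using that by force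
      then show ?thesis using member_le_sum_list[of m "map fst n_as"] unfolding K_def by simp
    qed
    then have "map (min K) ?L = ?L" by (intro map_idI) (simp add: min_absorb2)
    then show ?thesis by metis
  qed
  also have "\<dots> = kernel_dim (?C ^\<^sub>m K)"
    using dim_gen_eigenspace[OF jnf, of e K] unfolding dim_gen_eigenspace_def by simp
  also have "\<dots> = kernel_dim ?C"
  proof (rule kernel_dim_cong)
    show "mat_kernel (?C ^\<^sub>m K) = mat_kernel ?C"
      by (rule mat_kernel_power_eq[OF char_matrix_closed[OF B]]) (use no_chain K_def in auto)
  qed (use B in \<open>simp add: char_matrix_def\<close>)
  finally show ?thesis by simp
qed

lemma alg_mult_le_kernel_dim_char_matrix:
  fixes A :: "real mat"
  assumes A: "A \<in> carrier_mat n n" and gpos: "\<And>u. u < n \<Longrightarrow> g u > 0"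
    and gsym: "\<And>u w. u < n \<Longrightarrow> w < n \<Longrightarrow> g u * A $$ (u,w) = g w * A $$ (w,u)"
  shows "alg_mult \<mu> A \<le> kernel_dim (char_matrix (map_mat complex_of_real A) (complex_of_real \<mu>))"
proof -
  interpret map_poly_inj_idom_divide_hom "of_real :: real \<Rightarrow> complex" ..
  have "alg_mult \<mu> A = Polynomial.order (complex_of_real \<mu>) (char_poly (map_mat complex_of_real A))"
    unfolding alg_mult_def of_real_hom.char_poly_hom[OF A] order_hom ..
  also have "\<dots> \<le> kernel_dim (char_matrix (map_mat complex_of_real A) (complex_of_real \<mu>))"
    by (rule order_char_poly_le_kernel_dim)
      (use A symmetrizable_char_matrix_no_chain[OF A gpos gsym] in auto)
  finally show ?thesis .
qed

lemma principal_submatrix_char_matrix: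
  fixes A :: "real mat"
  assumes A: "A \<in> carrier_mat n n" and T: "T \<subseteq> {0..<n}"
  shows "principal_submatrix (char_matrix (map_mat complex_of_real A) (complex_of_real \<mu>)) T =
    char_matrix (map_mat complex_of_real (principal_submatrix A T)) (complex_of_real \<mu>)"
proof -
  have rows: "{i. i < n \<and> i \<in> T} = T" using T by auto
  have "pick T i = pick T j \<longleftrightarrow> i = j" if "i < card T" "j < card T" for i j
    using card_pick_le that by metis
  moreover have "pick T i < n" if "i < card T" for i using pick_in_set_le[OF that] T by auto
  ultimately show ?thesis
    using A unfolding principal_submatrix_def char_matrix_def
    by (intro eq_matI) (auto simp: submatrix_index dim_submatrix rows)
qed

lemma eigenvalue_of_real_iff:
  fixes B :: "real mat"
  assumes B: "B \<in> carrier_mat k k"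
  shows "eigenvalue (map_mat complex_of_real B) (complex_of_real \<mu>) \<longleftrightarrow> eigenvalue B \<mu>"
proof -
  have Bc: "map_mat complex_of_real B \<in> carrier_mat k k" using B by simp
  show ?thesis
    unfolding eigenvalue_root_char_poly[OF B] eigenvalue_root_char_poly[OF Bc]
    by (simp add: of_real_hom.char_poly_hom[OF B])
qed

text \<open>Since \<open>A\<close> is symmetrizable, \<open>mult(\<mu>, A)\<close> is the nullity of \<open>A - \<mu>\<close>; the first part then
  applies to the complex matrix \<open>A - \<mu>\<close>, which has the same off-diagonal pattern.\<close>

theorem principal_submatrix_eigenvalue:
  fixes A :: "real mat"
  assumes tree: "is_tree n E" and AR: "in_R n E A"
    and sub: "\<And>i. i < c \<Longrightarrow> is_subtree n E (Ts i)"
    and indep: "\<And>i j. i < c \<Longrightarrow> j < c \<Longrightarrow> i \<noteq> j \<Longrightarrow> independent E (Ts i) (Ts j)"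
    and big: "alg_mult \<mu> A > path_cover_number E ({0..<n} - (\<Union>i<c. Ts i))"
  shows "\<exists>i<c. eigenvalue (principal_submatrix A (Ts i)) \<mu>"
proof -
  let ?C = "char_matrix (map_mat complex_of_real A) (complex_of_real \<mu>)"
  have A: "A \<in> carrier_mat n n"
    and pattern: "\<And>u w. u < n \<Longrightarrow> w < n \<Longrightarrow> u \<noteq> w \<Longrightarrow> A $$ (u,w) \<noteq> 0 \<longleftrightarrow> E u w"
    using AR unfolding in_R_def by auto
  obtain g where g: "\<And>u. u < n \<Longrightarrow> g u > 0"
      "\<And>u w. u < n \<Longrightarrow> w < n \<Longrightarrow> g u * A $$ (u,w) = g w * A $$ (w,u)"
    using in_R_symmetrizable[OF tree AR] by blast
  have C: "?C \<in> carrier_mat n n" using A by simp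
  have C_pattern: "?C $$ (u,w) \<noteq> 0 \<longleftrightarrow> E u w" if "u < n" "w < n" "u \<noteq> w" for u w
    using pattern[OF that] that A by (simp add: char_matrix_def)
  have "kernel_dim ?C > path_cover_number E ({0..<n} - (\<Union>i<c. Ts i))"
    using alg_mult_le_kernel_dim_char_matrix[OF A g, of \<mu>] big by linarith
  from principal_submatrix_singular[OF tree C C_pattern sub indep this]
  obtain i where i: "i < c" and "det (principal_submatrix ?C (Ts i)) = 0" by blast
  moreover have T: "Ts i \<subseteq> {0..<n}" using sub[OF i] unfolding is_subtree_def by simp
  ultimately have "eigenvalue (map_mat complex_of_real (principal_submatrix A (Ts i))) (complex_of_real \<mu>)"
    using principal_submatrix_char_matrix[OF A T] eigenvalue_det principal_submatrix_carrier[OF A T]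
    by (metis map_carrier_mat)
  then show ?thesis using eigenvalue_of_real_iff[OF principal_submatrix_carrier[OF A T]] i by blast
qed

theorem mainTheorem9:
  fixes n c :: nat and E :: "nat \<Rightarrow> nat \<Rightarrow> bool" and A :: "real mat"
    and Ts :: "nat \<Rightarrow> nat set"
  assumes tree: "is_tree n E"
    and AR: "in_R n E A"
    and sub: "\<And>i. i < c \<Longrightarrow> is_subtree n E (Ts i)"
    and indep: "\<And>i j. i < c \<Longrightarrow> j < c \<Longrightarrow> i \<noteq> j \<Longrightarrow> independent E (Ts i) (Ts j)"
  shows "(kernel_dim A > path_cover_number E ({0..<n} - (\<Union>i<c. Ts i)) \<longrightarrow>
            (\<exists>i<c. det (principal_submatrix A (Ts i)) = 0))
       \<and> (\<forall>\<mu>::real. eigenvalue A \<mu> \<and>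
              alg_mult \<mu> A > path_cover_number E ({0..<n} - (\<Union>i<c. Ts i)) \<longrightarrow>
            (\<exists>i<c. eigenvalue (principal_submatrix A (Ts i)) \<mu>))"
proof (intro conjI impI allI)
  have A: "A \<in> carrier_mat n n"
    and pattern: "\<And>u w. u < n \<Longrightarrow> w < n \<Longrightarrow> u \<noteq> w \<Longrightarrow> A $$ (u,w) \<noteq> 0 \<longleftrightarrow> E u w"
    using AR unfolding in_R_def by auto
  show "\<exists>i<c. det (principal_submatrix A (Ts i)) = 0"
    if "kernel_dim A > path_cover_number E ({0..<n} - (\<Union>i<c. Ts i))"
    using principal_submatrix_singular[OF tree A pattern sub indep that] .
  show "\<exists>i<c. eigenvalue (principal_submatrix A (Ts i)) \<mu>"
    if "eigenvalue A \<mu> \<and> alg_mult \<mu> A > path_cover_number E ({0..<n} - (\<Union>i<c. Ts i))" for \<mu>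
  proof -
    from that have "alg_mult \<mu> A > path_cover_number E ({0..<n} - (\<Union>i<c. Ts i))" by blast
    from principal_submatrix_eigenvalue[OF tree AR sub indep this] show ?thesis .
  qed
qed

end
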